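(* Let $\mathbb{F}$ be an arbitrary field (any characteristic), $V$ an $n$-dimensional $\mathbb{F}$-vector space, and $b$ a non-degenerate symmetric or alternating bilinear form on $V$ with Witt index $\nu$. Let $\mathcal{F}$ be a maximal partially complete $b$-singular flag of $V$. Then: (a) $\mathrm{WS}_{b,\mathcal{F}}$ is a linear subspace of $\mathrm{End}(V)$ of dimension $\nu(n-\nu)$; (b) $\mathrm{WA}_{b,\mathcal{F}}$ is a linear subspace of $\mathrm{End}(V)$ of dimension $\nu(n-\nu-1)$.
   Context: The Witt index of $b$ is the maximal dimension of a totally singular subspace $X$ ($b(x,y)=0$ for all $x,y\in X$). An endomorphism $u$ is $b$-symmetric (resp. $b$-alternating) if $(x,y)\mapsto b(x,u(y))$ is symmetric (resp. alternating, i.e. vanishes on all $(x,x)$); $\mathcal{S}_b$, $\mathcal{A}_b$ denote the corresponding spaces. A flag $(F_0,\dots,F_p)$ is partially complete if $\dim F_i=i$ for all $i$, $b$-singular if $F_p$ is totally singular, maximal if $p=\nu$. $\mathrm{WS}_{b,\mathcal{F}}$ (resp. $\mathrm{WA}_{b,\mathcal{F}}$) is the set of nilpotent $u\in\mathcal{S}_b$ (resp. $u\in\mathcal{A}_b$) with $u(F_i)\subseteq F_i$ for all $i$. *)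

theory Defs
  imports Complex_Main "HOL-Library.Function_Algebras"
begin

definition fin_dim_vs :: "('a::field \<Rightarrow> 'v::ab_group_add \<Rightarrow> 'v) \<Rightarrow> bool" where
  "fin_dim_vs scale \<longleftrightarrow> vector_space scale \<and>
     (\<exists>B. finite B \<and> module.span scale B = UNIV)"

definition bilinear_form :: "('a::field \<Rightarrow> 'v::ab_group_add \<Rightarrow> 'v) \<Rightarrow> ('v \<Rightarrow> 'v \<Rightarrow> 'a) \<Rightarrow> bool" where
  "bilinear_form scale b \<longleftrightarrow>
     (\<forall>x. Vector_Spaces.linear scale (*) (b x)) \<and>
     (\<forall>y. Vector_Spaces.linear scale (*) (\<lambda>x. b x y))"

definition nondegenerate :: "('v::ab_group_add \<Rightarrow> 'v \<Rightarrow> 'a::field) \<Rightarrow> bool" where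
  "nondegenerate b \<longleftrightarrow> (\<forall>x. (\<forall>y. b x y = 0) \<longrightarrow> x = 0)"

definition symmetric_form :: "('v \<Rightarrow> 'v \<Rightarrow> 'a) \<Rightarrow> bool" where
  "symmetric_form b \<longleftrightarrow> (\<forall>x y. b x y = b y x)"

definition alternating_form :: "('v \<Rightarrow> 'v \<Rightarrow> 'a::zero) \<Rightarrow> bool" where
  "alternating_form b \<longleftrightarrow> (\<forall>x. b x x = 0)"

definition totally_singular :: "('a::field \<Rightarrow> 'v::ab_group_add \<Rightarrow> 'v) \<Rightarrow> ('v \<Rightarrow> 'v \<Rightarrow> 'a) \<Rightarrow> 'v set \<Rightarrow> bool" where
  "totally_singular scale b X \<longleftrightarrow> module.subspace scale X \<and> (\<forall>x\<in>X. \<forall>y\<in>X. b x y = 0)"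

definition witt_index :: "('a::field \<Rightarrow> 'v::ab_group_add \<Rightarrow> 'v) \<Rightarrow> ('v \<Rightarrow> 'v \<Rightarrow> 'a) \<Rightarrow> nat" where
  "witt_index scale b = Max {vector_space.dim scale X | X. totally_singular scale b X}"

definition is_flag :: "('a::field \<Rightarrow> 'v::ab_group_add \<Rightarrow> 'v) \<Rightarrow> (nat \<Rightarrow> 'v set) \<Rightarrow> nat \<Rightarrow> bool" where
  "is_flag scale F p \<longleftrightarrow> (\<forall>i\<le>p. module.subspace scale (F i)) \<and> (\<forall>i<p. F i \<subseteq> F (Suc i))"

definition partially_complete :: "('a::field \<Rightarrow> 'v::ab_group_add \<Rightarrow> 'v) \<Rightarrow> (nat \<Rightarrow> 'v set) \<Rightarrow> nat \<Rightarrow> bool" where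
  "partially_complete scale F p \<longleftrightarrow> (\<forall>i\<le>p. vector_space.dim scale (F i) = i)"

definition singular_flag :: "('a::field \<Rightarrow> 'v::ab_group_add \<Rightarrow> 'v) \<Rightarrow> ('v \<Rightarrow> 'v \<Rightarrow> 'a) \<Rightarrow> (nat \<Rightarrow> 'v set) \<Rightarrow> nat \<Rightarrow> bool" where
  "singular_flag scale b F p \<longleftrightarrow> totally_singular scale b (F p)"

text \<open>End(V), as a vector space of functions with pointwise operations.\<close>
definition end_scale :: "('a \<Rightarrow> 'v \<Rightarrow> 'v) \<Rightarrow> 'a \<Rightarrow> ('v \<Rightarrow> 'v) \<Rightarrow> ('v \<Rightarrow> 'v)" where
  "end_scale scale c u = (\<lambda>x. scale c (u x))"

definition End :: "('a::field \<Rightarrow> 'v::ab_group_add \<Rightarrow> 'v) \<Rightarrow> ('v \<Rightarrow> 'v) set" where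
  "End scale = {u. Vector_Spaces.linear scale scale u}"

definition b_symmetric_end :: "('a::field \<Rightarrow> 'v::ab_group_add \<Rightarrow> 'v) \<Rightarrow> ('v \<Rightarrow> 'v \<Rightarrow> 'a) \<Rightarrow> ('v \<Rightarrow> 'v) set" where
  "b_symmetric_end scale b = {u \<in> End scale. \<forall>x y. b x (u y) = b y (u x)}"

definition b_alternating_end :: "('a::field \<Rightarrow> 'v::ab_group_add \<Rightarrow> 'v) \<Rightarrow> ('v \<Rightarrow> 'v \<Rightarrow> 'a) \<Rightarrow> ('v \<Rightarrow> 'v) set" where
  "b_alternating_end scale b = {u \<in> End scale. \<forall>x. b x (u x) = 0}"

definition nilpotent_end :: "('v \<Rightarrow> 'v::zero) \<Rightarrow> bool" where
  "nilpotent_end u \<longleftrightarrow> (\<exists>k. (u ^^ k) = (\<lambda>_. 0))"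

definition stabilizes_flag :: "('v \<Rightarrow> 'v) \<Rightarrow> (nat \<Rightarrow> 'v set) \<Rightarrow> nat \<Rightarrow> bool" where
  "stabilizes_flag u F p \<longleftrightarrow> (\<forall>i\<le>p. u ` F i \<subseteq> F i)"

definition WS :: "('a::field \<Rightarrow> 'v::ab_group_add \<Rightarrow> 'v) \<Rightarrow> ('v \<Rightarrow> 'v \<Rightarrow> 'a) \<Rightarrow> (nat \<Rightarrow> 'v set) \<Rightarrow> nat \<Rightarrow> ('v \<Rightarrow> 'v) set" where
  "WS scale b F p = {u \<in> b_symmetric_end scale b. nilpotent_end u \<and> stabilizes_flag u F p}"

definition WA :: "('a::field \<Rightarrow> 'v::ab_group_add \<Rightarrow> 'v) \<Rightarrow> ('v \<Rightarrow> 'v \<Rightarrow> 'a) \<Rightarrow> (nat \<Rightarrow> 'v set) \<Rightarrow> nat \<Rightarrow> ('v \<Rightarrow> 'v) set" where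
  "WA scale b F p = {u \<in> b_alternating_end scale b. nilpotent_end u \<and> stabilizes_flag u F p}"

end

theory Submission
  imports Defs
begin

text \<open>
  Choose a basis adapted to the flag: \<open>v 0, \<dots>, v (i - 1)\<close> spans \<open>F i\<close>, the first \<open>\<nu> + m\<close> vectors
  span \<open>F \<nu>\<^sup>\<bottom>\<close>, and the last \<open>\<nu>\<close> vectors are hyperbolic partners of \<open>v 0, \<dots>, v (\<nu> - 1)\<close>, so
  \<open>n = 2\<nu> + m\<close>.  For \<open>u\<close> that is \<open>b\<close>-symmetric or \<open>b\<close>-alternating, nilpotency together with flag
  stability is equivalent to triangularity: \<open>u (v j) \<in> F j\<close> for \<open>j < \<nu>\<close> and \<open>u (F \<nu>\<^sup>\<bottom>) \<subseteq> F \<nu>\<close>.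
  The hard direction uses maximality of the totally singular \<open>F \<nu>\<close>: descending from \<open>u\<^sup>N = 0\<close>,
  each \<open>u\<^sup>s (F \<nu>\<^sup>\<bottom>)\<close> is totally singular and orthogonal to \<open>F \<nu>\<close>, hence contained in it.
  In terms of the matrix \<open>b (v i) (u (v j))\<close>, triangularity prescribes zeros, and the free entries up to
  (skew-)symmetry sit in column \<open>\<nu> + m + k\<close>, rows \<open>k < i \<le> \<nu> + m + k\<close> (\<open>k < i < \<nu> + m + k\<close> in
  the alternating case); there are \<open>\<nu> (\<nu> + m) = \<nu> (n - \<nu>)\<close>, resp. \<open>\<nu> (n - \<nu> - 1)\<close>, of them.
\<close>

lemma sum_apply: "(sum f A) x = (\<Sum>i\<in>A. f i x)"
  by (induction A rule: infinite_finite_induct) auto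

lemma vector_space_end_scale: "vector_space scale \<Longrightarrow> vector_space (end_scale scale)"
  unfolding vector_space_def end_scale_def by (auto simp: fun_eq_iff algebra_simps)

lemma skew_quadratic_sum_eq_0:
  fixes M :: "nat \<Rightarrow> nat \<Rightarrow> 'a::comm_ring"
  assumes "\<forall>i<K. M i i = 0" "\<forall>i<K. \<forall>j<K. M i j = - M j i"
  shows "(\<Sum>j<K. \<Sum>k<K. a j * M k j * a k) = 0"
  using assms
proof (induction K)
  case 0
  show ?case by simp
next
  case (Suc K)
  have p1: "\<forall>i<K. M i i = 0" "\<forall>i<K. \<forall>j<K. M i j = - M j i" using Suc.prems less_SucI by blast+
  have IH: "(\<Sum>j<K. \<Sum>k<K. a j * M k j * a k) = 0" using Suc.IH[OF p1] .
  have "(\<Sum>j<Suc K. \<Sum>k<Suc K. a j * M k j * a k)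
      = (\<Sum>j<K. (\<Sum>k<K. a j * M k j * a k) + a j * M K j * a K) + ((\<Sum>k<K. a K * M k K * a k) + a K * M K K * a K)"
    by (simp only: sum.lessThan_Suc)
  also have "\<dots> = (\<Sum>j<K. \<Sum>k<K. a j * M k j * a k) + (\<Sum>j<K. a j * M K j * a K + a K * M j K * a j)
        + a K * M K K * a K"
    by (simp only: sum.distrib) (simp add: algebra_simps)
  also have "(\<Sum>j<K. a j * M K j * a K + a K * M j K * a j) = 0"
  proof (intro sum.neutral ballI)
    fix j assume "j \<in> {..<K}"
    then have "j < Suc K" "K < Suc K" by auto
    then have "M K j = - M j K" using Suc.prems(2) by blast
    then show "a j * M K j * a K + a K * M j K * a j = 0" by (simp add: algebra_simps)
  qed
  also have "M K K = 0" using Suc.prems(1) by blast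
  finally show ?case using IH by simp
qed

definition perp :: "('v \<Rightarrow> 'v \<Rightarrow> 'a::zero) \<Rightarrow> 'v set \<Rightarrow> 'v set" where
  "perp b S = {x. \<forall>y\<in>S. b y x = 0}"

context vector_space
begin

lemma linear_funpow: "Vector_Spaces.linear scale scale u \<Longrightarrow> Vector_Spaces.linear scale scale (u ^^ k)"
proof (induction k)
  case 0
  then show ?case using vector_space_axioms by (simp add: vector_space.linear_ident)
next
  case (Suc k)
  then show ?case using Vector_Spaces.linear_compose[of scale scale "u^^k" scale u] by (simp add: comp_def)
qed

lemma endo_add: "Vector_Spaces.linear scale scale u \<Longrightarrow> u (x + y) = u x + u y"
  and endo_scale: "Vector_Spaces.linear scale scale u \<Longrightarrow> u (c *s x) = c *s u x"
  unfolding Vector_Spaces.linear_iff by blast+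

lemma endo_zero: "Vector_Spaces.linear scale scale u \<Longrightarrow> u 0 = 0"
  using endo_scale[of u 0 0] by simp

lemma endo_diff: "Vector_Spaces.linear scale scale u \<Longrightarrow> u (x - y) = u x - u y"
  unfolding Vector_Spaces.linear_iff by (metis add_diff_cancel diff_add_cancel)

lemma endo_sum: "Vector_Spaces.linear scale scale u \<Longrightarrow> u (sum f A) = (\<Sum>i\<in>A. u (f i))"
  by (induction A rule: infinite_finite_induct) (auto simp: endo_add endo_zero)

lemma endo_span_into_subspace:
  assumes "Vector_Spaces.linear scale scale u" and "u ` S \<subseteq> T" and "subspace T"
  shows "x \<in> span S \<Longrightarrow> u x \<in> T"
proof (induction rule: span_induct_alt)
  case base
  then show ?case using assms by (simp add: endo_zero subspace_0)
next
  case (step c x y)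
  then show ?case using assms by (simp add: endo_add endo_scale subspace_add subspace_scale image_subset_iff)
qed

lemma span_image_lessThan_imp_sum: "x \<in> span (v ` {..<K::nat}) \<Longrightarrow> \<exists>a. x = (\<Sum>i<K. a i *s v i)"
proof (induction rule: span_induct_alt)
  case base
  then show ?case by (intro exI[of _ "\<lambda>_. 0"]) simp
next
  case (step c x y)
  then obtain l a where l: "l < K" "x = v l" and a: "y = (\<Sum>i<K. a i *s v i)" by auto
  have e1: "(\<Sum>i<K. (if i = l then c else 0) *s v i) = c *s v l"
  proof -
    have "(\<Sum>i<K. (if i = l then c else 0) *s v i) = (\<Sum>i<K. (if i = l then c *s v l else 0))"
      by (intro sum.cong) auto
    also have "\<dots> = c *s v l" using l by (simp add: sum.delta sum.delta')
    finally show ?thesis .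
  qed
  have "(\<Sum>i<K. ((if i = l then c else 0) + a i) *s v i)
        = (\<Sum>i<K. (if i = l then c else 0) *s v i) + (\<Sum>i<K. a i *s v i)"
    unfolding scale_left_distrib sum.distrib ..
  then have "c *s x + y = (\<Sum>i<K. ((if i = l then c else 0) + a i) *s v i)"
    using e1 l a by simp
  then show ?case by (rule exI[where x="\<lambda>i. (if i = l then c else 0) + a i"])
qed

lemma sum_in_span_image_lessThan: "(\<Sum>i<(K::nat). a i *s v i) \<in> span (v ` {..<K})"
  by (intro span_sum span_scale span_base) auto

end

section \<open>Reflexive non-degenerate bilinear forms\<close>

locale reflexive_form = finite_dimensional_vector_space scale Basis
  for scale :: "'a::field \<Rightarrow> 'v::ab_group_add \<Rightarrow> 'v" (infixr \<open>*s\<close> 75) and Basis +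
  fixes b :: "'v \<Rightarrow> 'v \<Rightarrow> 'a"
  assumes bilinear: "bilinear_form scale b"
    and nondeg: "nondegenerate b"
    and reflexive: "b x y = 0 \<longleftrightarrow> b y x = 0"
begin

lemma b_add_right: "b x (y + z) = b x y + b x z"
  and b_scale_right: "b x (c *s y) = c * b x y"
  using bilinear unfolding bilinear_form_def Vector_Spaces.linear_iff by blast+

lemma b_add_left: "b (x + y) z = b x z + b y z"
  and b_scale_left: "b (c *s x) z = c * b x z"
  using bilinear unfolding bilinear_form_def Vector_Spaces.linear_iff by blast+

lemma b_zero_right [simp]: "b x 0 = 0"
  using b_scale_right[of x 0 0] by simp

lemma b_zero_left [simp]: "b 0 x = 0"
  using b_scale_left[of 0 0 x] by simp

lemma b_diff_right: "b x (y - z) = b x y - b x z"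
  by (metis b_add_right add_diff_cancel diff_add_cancel)

lemma b_diff_left: "b (x - y) z = b x z - b y z"
  by (metis b_add_left add_diff_cancel diff_add_cancel)

lemma b_sum_right: "b x (sum f A) = (\<Sum>i\<in>A. b x (f i))"
  by (induction A rule: infinite_finite_induct) (auto simp: b_add_right)

lemma b_sum_left: "b (sum f A) y = (\<Sum>i\<in>A. b (f i) y)"
  by (induction A rule: infinite_finite_induct) (auto simp: b_add_left)

lemmas b_simps = b_add_right b_scale_right b_add_left b_scale_left b_diff_right b_diff_left
  b_sum_right b_sum_left

lemma nondeg_right: "(\<And>y. b x y = 0) \<Longrightarrow> x = 0"
  using nondeg unfolding nondegenerate_def by blast

lemma nondeg_left: "(\<And>y. b y x = 0) \<Longrightarrow> x = 0"
  using nondeg_right reflexive by blast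

lemma reflexive_form_swap: "reflexive_form scale Basis (\<lambda>x y. b y x)"
proof unfold_locales
  show "bilinear_form scale (\<lambda>x y. b y x)"
    using bilinear unfolding bilinear_form_def by simp
  show "nondegenerate (\<lambda>x y. b y x)"
    unfolding nondegenerate_def using nondeg_left by blast
qed (rule reflexive)

lemma b_span_left_eq_0: "x \<in> span S \<Longrightarrow> (\<And>s. s \<in> S \<Longrightarrow> b s y = 0) \<Longrightarrow> b x y = 0"
  by (induction rule: span_induct_alt) (auto simp: b_simps)

lemma b_span_right_eq_0: "x \<in> span S \<Longrightarrow> (\<And>s. s \<in> S \<Longrightarrow> b y s = 0) \<Longrightarrow> b y x = 0"
  by (induction rule: span_induct_alt) (auto simp: b_simps)

lemma subspace_perp: "subspace (perp b S)"
  unfolding subspace_def perp_def by (auto simp: b_simps)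

lemma perp_left: "x \<in> perp b S \<Longrightarrow> y \<in> S \<Longrightarrow> b y x = 0"
  unfolding perp_def by blast

lemma perp_right: "x \<in> perp b S \<Longrightarrow> y \<in> S \<Longrightarrow> b x y = 0"
  unfolding perp_def using reflexive by blast

definition lin_indep_family :: "(nat \<Rightarrow> 'v) \<Rightarrow> nat \<Rightarrow> bool" where
  "lin_indep_family v K \<longleftrightarrow> (\<forall>a. (\<Sum>i<K. a i *s v i) = 0 \<longrightarrow> (\<forall>i<K. a i = 0))"

lemma lin_indep_familyD: "lin_indep_family v K \<Longrightarrow> (\<Sum>i<K. a i *s v i) = 0 \<Longrightarrow> i < K \<Longrightarrow> a i = 0"
  unfolding lin_indep_family_def by blast

lemma lin_indep_family_mono:
  assumes indep: "lin_indep_family v K" and "L \<le> K"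
  shows "lin_indep_family v L"
  unfolding lin_indep_family_def
proof (intro allI impI)
  fix a i assume sum: "(\<Sum>i<L. a i *s v i) = 0" and i: "i < L"
  let ?a = "\<lambda>i. if i < L then a i else 0"
  have "(\<Sum>i<K. ?a i *s v i) = (\<Sum>i<L. a i *s v i)"
    using \<open>L \<le> K\<close> by (intro sum.mono_neutral_cong_right) auto
  then have "?a i = 0" using lin_indep_familyD[OF indep, of ?a i] sum i \<open>L \<le> K\<close> by simp
  then show "a i = 0" using i by simp
qed

lemma lin_indep_family_imp_independent:
  assumes h: "lin_indep_family v K"
  shows "inj_on v {..<K} \<and> independent (v ` {..<K})"
proof
  show "inj_on v {..<K}"
  proof (rule inj_onI, rule ccontr)
    fix i j assume ij: "i \<in> {..<K}" "j \<in> {..<K}" "v i = v j" "i \<noteq> j"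
    let ?a = "\<lambda>l. (if l = i then 1 else 0) - (if l = j then 1 else (0::'a))"
    have "(\<Sum>l<K. ?a l *s v l) = (\<Sum>l<K. (if l = i then v l else 0)) - (\<Sum>l<K. (if l = j then v l else 0))"
      unfolding scale_left_diff_distrib sum_subtractf by (intro arg_cong2[where f="(-)"] sum.cong) auto
    also have "\<dots> = 0" using ij by (simp add: sum.delta)
    moreover have "(\<Sum>l<K. ?a l *s v l) = 0 \<longrightarrow> (\<forall>l<K. ?a l = 0)"
      using h unfolding lin_indep_family_def by (rule spec)
    ultimately have all0: "\<forall>l<K. ?a l = 0" by simp
    have "?a i = 0" using all0 ij(1) by blast
    then show False using ij(4) by simp
  qed
  then have inj: "inj_on v {..<K}" .
  show "independent (v ` {..<K})"
  proof
    assume "dependent (v ` {..<K})"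
    moreover have "finite (v ` {..<K})" by simp
    ultimately obtain u where u: "\<exists>x\<in>v ` {..<K}. u x \<noteq> 0" "(\<Sum>x\<in>v ` {..<K}. u x *s x) = 0"
      using dependent_finite by metis
    have "(\<Sum>i<K. u (v i) *s v i) = 0" using u(2) inj by (simp add: sum.reindex)
    then have "\<forall>i<K. u (v i) = 0" using lin_indep_familyD[OF h, of "\<lambda>i. u (v i)"] by blast
    then show False using u(1) by auto
  qed
qed

lemma independent_imp_lin_indep_family:
  assumes "inj_on v {..<K}" and "independent (v ` {..<K})"
  shows "lin_indep_family v K"
  unfolding lin_indep_family_def
proof (intro allI impI)
  fix a i assume s: "(\<Sum>i<K. a i *s v i) = 0" and i: "i < K"
  let ?u = "\<lambda>x. a (the_inv_into {..<K} v x)"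
  have "(\<Sum>x\<in>v ` {..<K}. ?u x *s x) = (\<Sum>i<K. ?u (v i) *s v i)"
    using assms(1) by (simp add: sum.reindex)
  also have "\<dots> = (\<Sum>i<K. a i *s v i)"
    using assms(1) by (intro sum.cong) (auto simp: the_inv_into_f_f)
  finally have "(\<Sum>x\<in>v ` {..<K}. ?u x *s x) = 0" using s by simp
  then have "?u (v i) = 0" using assms(2) i
    by (intro independentD[of "v ` {..<K}" "v ` {..<K}"]) auto
  then show "a i = 0" using assms(1) i by (simp add: the_inv_into_f_f)
qed

lemma dim_UNIV_eq_lin_indep_family:
  assumes "lin_indep_family v N" and "span (v ` {..<N}) = UNIV"
  shows "dim (UNIV :: 'v set) = N"
proof -
  have "inj_on v {..<N}" "independent (v ` {..<N})"
    using lin_indep_family_imp_independent[OF assms(1)] by auto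
  then have "dim (v ` {..<N}) = N"
    using dim_eq_card_independent card_image by (metis card_lessThan)
  then show ?thesis using assms(2) dim_span by metis
qed

lemma dual_vector_extend:
  assumes indep: "lin_indep_family x (Suc K)"
    and dual: "\<And>i j. i < K \<Longrightarrow> j < K \<Longrightarrow> b (x i) (y j) = (if i = j then 1 else 0)"
  obtains y' where "\<And>l. l < K \<Longrightarrow> b (x l) y' = 0" and "b (x K) y' = 1"
proof -
  define c where "c i = b (x K) (y i)" for i
  define z where "z = x K - (\<Sum>i<K. c i *s x i)"
  have "z \<noteq> 0"
  proof
    assume "z = 0"
    then have "(\<Sum>i<Suc K. (if i < K then - c i else 1) *s x i) = 0"
      unfolding z_def by (simp add: scale_minus_left sum_negf)
    from lin_indep_familyD[OF indep this, of K] show False by simp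
  qed
  then obtain t where t: "b z t \<noteq> 0" using nondeg_right by blast
  define t1 where "t1 = inverse (b z t) *s t"
  have t1: "b z t1 = 1" using t unfolding t1_def by (simp add: b_scale_right)
  define y' where "y' = t1 - (\<Sum>i<K. b (x i) t1 *s y i)"
  have y'_orth: "b (x l) y' = 0" if "l < K" for l
  proof -
    have "(\<Sum>i<K. b (x i) t1 * b (x l) (y i)) = (\<Sum>i<K. if i = l then b (x l) t1 else 0)"
      using that by (intro sum.cong) (auto simp: dual)
    then show ?thesis unfolding y'_def using that by (simp add: b_simps)
  qed
  have "b z (y i) = 0" if "i < K" for i
  proof -
    have "(\<Sum>l<K. c l * b (x l) (y i)) = (\<Sum>l<K. if l = i then c i else 0)"
      using that by (intro sum.cong) (auto simp: dual)
    then show ?thesis unfolding z_def using that by (simp add: b_simps c_def)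
  qed
  then have "b z y' = 1" using t1 unfolding y'_def by (simp add: b_simps)
  moreover have "b (x K) y' = b z y' + (\<Sum>i<K. c i * b (x i) y')"
    unfolding z_def by (simp add: b_simps)
  ultimately have "b (x K) y' = 1" by (simp add: y'_orth)
  with y'_orth show thesis by (rule that)
qed

lemma dual_family_exists:
  "lin_indep_family x K \<Longrightarrow> \<exists>y. \<forall>i<K. \<forall>j<K. b (x i) (y j) = (if i = j then 1 else 0)"
proof (induction K)
  case 0
  then show ?case by simp
next
  case (Suc K)
  then obtain y where y: "\<And>i j. i < K \<Longrightarrow> j < K \<Longrightarrow> b (x i) (y j) = (if i = j then 1 else 0)"
    using lin_indep_family_mono by (metis le_SucI order_refl)
  obtain y' where y': "\<And>l. l < K \<Longrightarrow> b (x l) y' = 0" "b (x K) y' = 1"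
    using dual_vector_extend[OF Suc.prems y] by blast
  define Y where "Y j = (if j < K then y j - b (x K) (y j) *s y' else y')" for j
  have "b (x i) (Y j) = (if i = j then 1 else 0)" if "i < Suc K" "j < Suc K" for i j
    using that y y' by (cases "i < K"; cases "j < K") (auto simp: Y_def b_simps less_Suc_eq)
  then show ?case by blast
qed

end

section \<open>Coordinates adapted to a maximal singular flag\<close>

text \<open>\<open>w\<close> and \<open>w'\<close> are the dual bases of \<open>v\<close> with respect to \<open>b\<close> on the right and on the left.\<close>

locale witt_basis = reflexive_form scale Basis b
  for scale :: "'a::field \<Rightarrow> 'v::ab_group_add \<Rightarrow> 'v" (infixr \<open>*s\<close> 75) and Basis b +
  fixes F :: "nat \<Rightarrow> 'v set" and \<nu> m :: nat and v w w' :: "nat \<Rightarrow> 'v"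
  assumes flag_span: "\<And>i. i \<le> \<nu> \<Longrightarrow> F i = span (v ` {..<i})"
    and perp_span: "perp b (F \<nu>) = span (v ` {..<\<nu>+m})"
    and left_dual: "\<And>i j. i < \<nu>+m+\<nu> \<Longrightarrow> j < \<nu>+m+\<nu> \<Longrightarrow> b (w' j) (v i) = (if j = i then 1 else 0)"
    and expansion: "\<And>x. x = (\<Sum>i<\<nu>+m+\<nu>. b (w' i) x *s v i)"
    and right_dual: "\<And>i j. i < \<nu>+m+\<nu> \<Longrightarrow> j < \<nu>+m+\<nu> \<Longrightarrow> b (v i) (w j) = (if i = j then 1 else 0)"
    and tail_dual: "\<And>i. i < \<nu> \<Longrightarrow> \<exists>s. w (\<nu>+m+i) = s *s v i"
    and tail_orth: "\<And>k l. k < \<nu> \<Longrightarrow> l < \<nu> \<Longrightarrow> l \<noteq> k \<Longrightarrow> b (v (\<nu>+m+k)) (v l) = 0"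
    and top_singular: "totally_singular scale b (F \<nu>)"
    and witt_maximal: "\<And>X. totally_singular scale b X \<Longrightarrow> dim X \<le> \<nu>"
    and top_dim: "dim (F \<nu>) = \<nu>"
    and v_notin_flag: "\<And>j. j < \<nu> \<Longrightarrow> v j \<notin> F j"
begin

abbreviation "n \<equiv> \<nu>+m+\<nu>"

lemma right_dual_expansion: "z = (\<Sum>k<n. b (v k) z *s w k)"
proof -
  define d where "d = z - (\<Sum>k<n. b (v k) z *s w k)"
  have dv: "b (v i) d = 0" if "i < n" for i
  proof -
    have "(\<Sum>k<n. b (v k) z * b (v i) (w k)) = (\<Sum>k<n. if k = i then b (v i) z else 0)"
      using that by (intro sum.cong) (auto simp: right_dual)
    then show ?thesis using that unfolding d_def by (simp add: b_simps)
  qed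
  have "b y d = 0" for y
  proof -
    have "b y d = b (\<Sum>i<n. b (w' i) y *s v i) d" using expansion[of y] by simp
    also have "\<dots> = 0" by (simp add: b_simps dv)
    finally show ?thesis .
  qed
  then have "d = 0" using nondeg_left by blast
  then show ?thesis unfolding d_def by simp
qed

lemma b_right_dual: "k < n \<Longrightarrow> b x (w k) = b (w' k) x"
proof -
  assume k: "k < n"
  have "b x (w k) = b (\<Sum>i<n. b (w' i) x *s v i) (w k)" using expansion[of x] by simp
  also have "\<dots> = (\<Sum>i<n. b (w' i) x * b (v i) (w k))" by (simp add: b_simps)
  also have "\<dots> = (\<Sum>i<n. if i = k then b (w' k) x else 0)"
    using k by (intro sum.cong) (auto simp: right_dual)
  also have "\<dots> = b (w' k) x" using k by simp
  finally show ?thesis .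
qed

definition endo_of :: "(nat \<Rightarrow> nat \<Rightarrow> 'a) \<Rightarrow> 'v \<Rightarrow> 'v" where
  "endo_of M x = (\<Sum>j<n. \<Sum>k<n. (b (w' j) x * M k j) *s w k)"

definition mat_of :: "('v \<Rightarrow> 'v) \<Rightarrow> nat \<Rightarrow> nat \<Rightarrow> 'a" where
  "mat_of u i j = b (v i) (u (v j))"

lemma linear_endo_of: "Vector_Spaces.linear scale scale (endo_of M)"
  unfolding Vector_Spaces.linear_iff
proof (intro conjI allI)
  show "vector_space scale" by (rule vector_space_axioms)
  show "vector_space scale" by (rule vector_space_axioms)
  fix x y
  show "endo_of M (x + y) = endo_of M x + endo_of M y"
    unfolding endo_of_def by (simp add: b_add_right distrib_right scale_left_distrib sum.distrib)
next
  fix c x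
  show "endo_of M (c *s x) = c *s endo_of M x"
    unfolding endo_of_def by (simp add: b_scale_right scale_sum_right mult.assoc)
qed

lemma mat_of_endo_of: "i < n \<Longrightarrow> j < n \<Longrightarrow> mat_of (endo_of M) i j = M i j"
proof -
  assume i: "i < n" and j: "j < n"
  have "mat_of (endo_of M) i j = (\<Sum>j'<n. \<Sum>k<n. b (w' j') (v j) * M k j' * b (v i) (w k))"
    unfolding mat_of_def endo_of_def by (simp add: b_simps)
  also have "\<dots> = (\<Sum>j'<n. if j' = j then M i j else 0)"
  proof (intro sum.cong refl)
    fix j' assume j': "j' \<in> {..<n}"
    have "(\<Sum>k<n. b (w' j') (v j) * M k j' * b (v i) (w k)) = (\<Sum>k<n. if k = i then b (w' j') (v j) * M i j' else 0)"
      using i by (intro sum.cong) (auto simp: right_dual)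
    also have "\<dots> = b (w' j') (v j) * M i j'" using i by simp
    also have "\<dots> = (if j' = j then M i j else 0)" using j j' by (simp add: left_dual)
    finally show "(\<Sum>k<n. b (w' j') (v j) * M k j' * b (v i) (w k)) = (if j' = j then M i j else 0)" .
  qed
  also have "\<dots> = M i j" using j by simp
  finally show ?thesis .
qed

lemma endo_of_mat_of: "Vector_Spaces.linear scale scale u \<Longrightarrow> endo_of (mat_of u) = u"
proof
  fix x assume l: "Vector_Spaces.linear scale scale u"
  have "u x = u (\<Sum>j<n. b (w' j) x *s v j)" using expansion[of x] by simp
  also have "\<dots> = (\<Sum>j<n. b (w' j) x *s u (v j))" by (simp add: endo_sum[OF l] endo_scale[OF l])
  also have "\<dots> = (\<Sum>j<n. b (w' j) x *s (\<Sum>k<n. b (v k) (u (v j)) *s w k))"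
    using right_dual_expansion by metis
  also have "\<dots> = endo_of (mat_of u) x" unfolding endo_of_def mat_of_def by (simp add: scale_sum_right)
  finally show "endo_of (mat_of u) x = u x" by simp
qed

lemma b_endo_of: "b x (endo_of M y) = (\<Sum>j<n. \<Sum>k<n. b (w' j) y * M k j * b (w' k) x)"
  unfolding endo_of_def by (simp add: b_simps b_right_dual)

definition orth_symmetric :: "('v \<Rightarrow> 'v) \<Rightarrow> bool" where
  "orth_symmetric u \<longleftrightarrow> (\<forall>x y. b x (u y) = 0 \<longleftrightarrow> b y (u x) = 0)"

definition flag_triangular :: "('v \<Rightarrow> 'v) \<Rightarrow> bool" where
  "flag_triangular u \<longleftrightarrow> (\<forall>j<\<nu>. u (v j) \<in> F j) \<and> (\<forall>x\<in>perp b (F \<nu>). u x \<in> F \<nu>)"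

text \<open>The matrix positions at which every flag-triangular \<open>u\<close> has a zero entry.\<close>

definition forced_zero :: "nat \<Rightarrow> nat \<Rightarrow> bool" where
  "forced_zero i j \<longleftrightarrow> (i < \<nu>+m \<and> j < \<nu>+m) \<or> (\<nu>+m \<le> i \<and> j < \<nu> \<and> j \<le> i - (\<nu>+m))"

lemma subspace_flag: "i \<le> \<nu> \<Longrightarrow> subspace (F i)"
  using flag_span by simp

lemma flag_mono: "i \<le> j \<Longrightarrow> j \<le> \<nu> \<Longrightarrow> F i \<subseteq> F j"
  using flag_span[of i] flag_span[of j] by (simp add: span_mono image_mono)

lemma flag_0: "F 0 = {0}"
  using flag_span[of 0] by (simp add: span_empty)

lemma v_in_flag: "l < i \<Longrightarrow> i \<le> \<nu> \<Longrightarrow> v l \<in> F i"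
  using flag_span[of i] by (simp add: span_base)

lemma v_in_perp: "l < \<nu>+m \<Longrightarrow> v l \<in> perp b (F \<nu>)"
  using perp_span by (simp add: span_base)

lemma flag_Suc: "i < \<nu> \<Longrightarrow> F (Suc i) = span (insert (v i) (v ` {..<i}))"
  using flag_span[of "Suc i"] by (simp add: lessThan_Suc)

lemma b_top_eq_0: "x \<in> F \<nu> \<Longrightarrow> y \<in> F \<nu> \<Longrightarrow> b x y = 0"
  using top_singular unfolding totally_singular_def by blast

lemma funpow_orth_symmetric:
  assumes "orth_symmetric u"
  shows "b ((u^^k) a) c = 0 \<longleftrightarrow> b a ((u^^k) c) = 0"
proof (induction k arbitrary: c)
  case 0
  then show ?case by simp
next
  case (Suc k)
  have "b ((u^^Suc k) a) c = 0 \<longleftrightarrow> b (u ((u^^k) a)) c = 0" by simp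
  also have "\<dots> \<longleftrightarrow> b c (u ((u^^k) a)) = 0" using reflexive by blast
  also have "\<dots> \<longleftrightarrow> b ((u^^k) a) (u c) = 0" using assms unfolding orth_symmetric_def by blast
  also have "\<dots> \<longleftrightarrow> b a ((u^^k) (u c)) = 0" using Suc.IH by blast
  also have "(u^^k) (u c) = (u^^Suc k) c" by (simp add: funpow_swap1)
  finally show ?case .
qed

section \<open>Nilpotent flag-stable endomorphisms are triangular\<close>

lemma nilpotent_stable_lowers_flag:
  assumes lin: "Vector_Spaces.linear scale scale u"
    and nil: "nilpotent_end u" and stab: "stabilizes_flag u F \<nu>" and j: "j < \<nu>"
  shows "u (v j) \<in> F j"
proof -
  obtain N where N: "u ^^ N = (\<lambda>_. 0)" using nil unfolding nilpotent_end_def by blast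
  have st: "i \<le> \<nu> \<Longrightarrow> y \<in> F i \<Longrightarrow> u y \<in> F i" for i y
    using stab unfolding stabilizes_flag_def by blast
  have Fj: "subspace (F j)" using subspace_flag j by simp
  have "u (v j) \<in> F (Suc j)" using st[of "Suc j"] v_in_flag[of j "Suc j"] j by simp
  then obtain c where c: "u (v j) - c *s v j \<in> F j"
    using flag_Suc[OF j] flag_span[of j] j span_breakdown_eq by auto
  \<comment> \<open>Modulo \<open>F j\<close>, \<open>u\<close> acts on \<open>v j\<close> as the scalar \<open>c\<close>, so nilpotency forces \<open>c = 0\<close>.\<close>
  have pw: "(u^^t) (v j) - (c^t) *s v j \<in> F j" for t
  proof (induction t)
    case 0
    then show ?case using Fj by (simp add: subspace_0)
  next
    case (Suc t)
    define r where "r = (u^^t) (v j) - (c^t) *s v j"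
    have "(u^^Suc t) (v j) - (c^Suc t) *s v j = u r + c^t *s (u (v j) - c *s v j)"
      unfolding r_def by (simp add: endo_diff[OF lin] endo_scale[OF lin] scale_right_diff_distrib)
    moreover have "u r \<in> F j" using st[of j r] Suc j unfolding r_def by simp
    ultimately show ?case using c Fj by (simp add: subspace_add subspace_scale)
  qed
  have "c = 0"
  proof (rule ccontr)
    assume "c \<noteq> 0"
    have "- ((c^N) *s v j) \<in> F j" using pw[of N] N by simp
    then have "(c^N) *s v j \<in> F j" using Fj by (metis minus_minus subspace_neg)
    then have "inverse (c^N) *s ((c^N) *s v j) \<in> F j" by (rule subspace_scale[OF Fj])
    then have "v j \<in> F j" using \<open>c \<noteq> 0\<close> by simp
    then show False using v_notin_flag j by blast
  qed
  then show ?thesis using c by simp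
qed

lemma orth_symmetric_stable_perp:
  assumes adj: "orth_symmetric u" and stab: "stabilizes_flag u F \<nu>"
    and x: "x \<in> perp b (F \<nu>)"
  shows "u x \<in> perp b (F \<nu>)"
  unfolding perp_def
proof (intro CollectI ballI)
  fix y assume "y \<in> F \<nu>"
  then have "u y \<in> F \<nu>" using stab unfolding stabilizes_flag_def by blast
  then have "b x (u y) = 0" using perp_right[OF x] by blast
  then show "b y (u x) = 0" using adj unfolding orth_symmetric_def by blast
qed

lemma totally_singular_in_perp_subset_top:
  assumes Y: "subspace Y" "Y \<subseteq> perp b (F \<nu>)"
    and Yts: "\<And>y1 y2. y1 \<in> Y \<Longrightarrow> y2 \<in> Y \<Longrightarrow> b y1 y2 = 0"
  shows "Y \<subseteq> F \<nu>"
proof -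
  define T where "T = {a + y |a y. a \<in> F \<nu> \<and> y \<in> Y}"
  have subT: "subspace T" unfolding T_def using subspace_sums[OF subspace_flag[of \<nu>] Y(1)] by simp
  have "totally_singular scale b T" unfolding totally_singular_def
  proof (intro conjI ballI subT)
    fix p q assume "p \<in> T" "q \<in> T"
    then obtain a1 y1 a2 y2 where pq: "p = a1 + y1" "q = a2 + y2" "a1 \<in> F \<nu>" "y1 \<in> Y" "a2 \<in> F \<nu>" "y2 \<in> Y"
      unfolding T_def by blast
    have "b a1 a2 = 0" "b a1 y2 = 0" "b y1 a2 = 0" "b y1 y2 = 0"
      using b_top_eq_0 perp_left[of y2] perp_right[of y1] Yts Y(2) pq by blast+
    then show "b p q = 0" using pq by (simp add: b_add_left b_add_right)
  qed
  moreover have "F \<nu> \<subseteq> T" "Y \<subseteq> T"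
    unfolding T_def using subspace_0[OF Y(1)] subspace_0[OF subspace_flag[of \<nu>]] by force+
  ultimately have "F \<nu> = T"
    using subspace_dim_equal[OF subspace_flag[of \<nu>] subT] witt_maximal top_dim by simp
  with \<open>Y \<subseteq> T\<close> show ?thesis by simp
qed

lemma perp_funpow_into_top_step:
  assumes lin: "Vector_Spaces.linear scale scale u" and adj: "orth_symmetric u"
    and stab: "stabilizes_flag u F \<nu>"
    and step: "\<forall>x\<in>perp b (F \<nu>). (u^^Suc (Suc t)) x \<in> F \<nu>"
  shows "\<forall>x\<in>perp b (F \<nu>). (u^^Suc t) x \<in> F \<nu>"
proof -
  let ?P = "perp b (F \<nu>)" and ?s = "Suc t"
  have top_stable: "(u^^k) y \<in> F \<nu>" if "y \<in> F \<nu>" for y k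
    using that stab by (induction k) (auto simp: stabilizes_flag_def)
  have "subspace ((u^^?s) ` ?P)"
    using module_hom.subspace_image[OF linear_funpow[OF lin, unfolded linear_iff_module_hom] subspace_perp] .
  moreover have "(u^^?s) ` ?P \<subseteq> ?P"
  proof -
    have "(u^^k) x \<in> ?P" if "x \<in> ?P" for x k
      using that by (induction k) (auto intro: orth_symmetric_stable_perp[OF adj stab])
    then show ?thesis by blast
  qed
  \<comment> \<open>\<open>b (u\<^sup>s x1) (u\<^sup>s x2) = 0\<close> iff \<open>b x1 (u\<^sup>2\<^sup>s x2) = 0\<close>, and \<open>u\<^sup>2\<^sup>s x2 = u\<^sup>t (u\<^sup>s\<^sup>+\<^sup>1 x2) \<in> F \<nu>\<close>.\<close>
  moreover have "b y1 y2 = 0" if y: "y1 \<in> (u^^?s) ` ?P" "y2 \<in> (u^^?s) ` ?P" for y1 y2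
  proof -
    obtain x1 x2 where x: "x1 \<in> ?P" "x2 \<in> ?P" "y1 = (u^^?s) x1" "y2 = (u^^?s) x2"
      using y by blast
    have "(u^^?s) ((u^^?s) x2) = (u^^(?s + ?s)) x2" by (simp only: funpow_add comp_def)
    also have "?s + ?s = t + Suc (Suc t)" by simp
    also have "(u^^(t + Suc (Suc t))) x2 = (u^^t) ((u^^Suc (Suc t)) x2)" by (simp only: funpow_add comp_def)
    finally have "(u^^?s) ((u^^?s) x2) = (u^^t) ((u^^Suc (Suc t)) x2)" .
    then have "(u^^?s) ((u^^?s) x2) \<in> F \<nu>" using step x(2) top_stable by simp
    then have "b x1 ((u^^?s) ((u^^?s) x2)) = 0" using perp_right[OF x(1)] by blast
    then show ?thesis using funpow_orth_symmetric[OF adj] x by blast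
  qed
  ultimately have "(u^^?s) ` ?P \<subseteq> F \<nu>" by (rule totally_singular_in_perp_subset_top)
  then show ?thesis by blast
qed

lemma nilpotent_maps_perp_into_top:
  assumes lin: "Vector_Spaces.linear scale scale u" and adj: "orth_symmetric u"
    and nil: "nilpotent_end u" and stab: "stabilizes_flag u F \<nu>"
    and x: "x \<in> perp b (F \<nu>)"
  shows "u x \<in> F \<nu>"
proof -
  obtain N where N: "u ^^ N = (\<lambda>_. 0)" using nil unfolding nilpotent_end_def by blast
  \<comment> \<open>Descending induction from \<open>u\<^sup>N = 0\<close> down to \<open>u\<^sup>1\<close>.\<close>
  have "\<forall>x\<in>perp b (F \<nu>). (u^^Suc (N - k)) x \<in> F \<nu>" for k
  proof (induction k)
    case 0
    then show ?case using N subspace_flag[of \<nu>] endo_zero[OF lin]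
      by (simp add: funpow_swap1 subspace_0)
  next
    case (Suc k)
    show ?case
    proof (cases "k < N")
      case True
      then have "Suc (N - k) = Suc (Suc (N - Suc k))" by simp
      then show ?thesis using perp_funpow_into_top_step[OF lin adj stab] Suc.IH by metis
    next
      case False
      then show ?thesis using Suc.IH by simp
    qed
  qed
  from this[of N] x show ?thesis by simp
qed

lemma nilpotent_stable_imp_flag_triangular:
  assumes "Vector_Spaces.linear scale scale u" and "orth_symmetric u"
    and "nilpotent_end u" and "stabilizes_flag u F \<nu>"
  shows "flag_triangular u"
  unfolding flag_triangular_def
  using nilpotent_stable_lowers_flag nilpotent_maps_perp_into_top assms by blast

lemma flag_triangular_mat_of_forced_zero:
  assumes tri: "flag_triangular u" and i: "i < n" and j: "j < n" and Z: "forced_zero i j"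
  shows "mat_of u i j = 0"
proof (cases "i < \<nu>+m \<and> j < \<nu>+m")
  case True
  then have "u (v j) \<in> F \<nu>" using tri v_in_perp unfolding flag_triangular_def by blast
  then show ?thesis unfolding mat_of_def using perp_right[OF v_in_perp[of i]] True by blast
next
  case False
  then have h: "\<nu>+m \<le> i" "j < \<nu>" "j \<le> i - (\<nu>+m)" using Z unfolding forced_zero_def by auto
  define k where "k = i - (\<nu>+m)"
  have k: "k < \<nu>" "i = \<nu>+m+k" using h i unfolding k_def by auto
  have "u (v j) \<in> span (v ` {..<j})" using tri h flag_span[of j] unfolding flag_triangular_def by auto
  then show ?thesis unfolding mat_of_def
  proof (rule b_span_right_eq_0)
    fix s assume "s \<in> v ` {..<j}"
    then obtain l where l: "l < j" "s = v l" by blast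
    then have "l \<noteq> k" "l < \<nu>" using h unfolding k_def by auto
    then show "b (v i) s = 0" using tail_orth[of k l] k l by simp
  qed
qed

lemma mat_of_forced_zero_imp_in_flag:
  assumes Z: "\<And>i j. i < n \<Longrightarrow> j < n \<Longrightarrow> forced_zero i j \<Longrightarrow> mat_of u i j = 0"
    and j: "j < \<nu> + m"
  shows "u (v j) \<in> F (min j \<nu>)"
proof -
  \<comment> \<open>Expand \<open>u (v j)\<close> in the basis \<open>w\<close>; the surviving terms have \<open>w k \<in> span {v (k - (\<nu>+m))}\<close>.\<close>
  have "u (v j) = (\<Sum>k<n. mat_of u k j *s w k)" unfolding mat_of_def using right_dual_expansion by metis
  also have "\<dots> \<in> span (v ` {..<min j \<nu>})"
  proof (intro span_sum)
    fix k assume k: "k \<in> {..<n}"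
    show "mat_of u k j *s w k \<in> span (v ` {..<min j \<nu>})"
    proof (cases "forced_zero k j")
      case True
      then show ?thesis using Z k j by (simp add: span_zero)
    next
      case False
      then have k': "\<nu>+m \<le> k" "k - (\<nu>+m) < min j \<nu>" using j k unfolding forced_zero_def by auto
      then have "k - (\<nu>+m) < \<nu>" by simp
      then obtain s where "w (\<nu>+m+(k - (\<nu>+m))) = s *s v (k - (\<nu>+m))" using tail_dual by blast
      moreover have "\<nu>+m+(k - (\<nu>+m)) = k" using k' by simp
      moreover have "v (k - (\<nu>+m)) \<in> span (v ` {..<min j \<nu>})" using k' by (simp add: span_base)
      ultimately show ?thesis by (simp add: span_scale)
    qed
  qed
  finally show ?thesis using flag_span[of "min j \<nu>"] by simp
qed

lemma mat_of_forced_zero_imp_flag_triangular: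
  assumes lin: "Vector_Spaces.linear scale scale u"
    and Z: "\<And>i j. i < n \<Longrightarrow> j < n \<Longrightarrow> forced_zero i j \<Longrightarrow> mat_of u i j = 0"
  shows "flag_triangular u"
proof -
  have "u (v j) \<in> F j" if "j < \<nu>" for j
    using mat_of_forced_zero_imp_in_flag[OF Z, of j] that by simp
  moreover have "u x \<in> F \<nu>" if "x \<in> perp b (F \<nu>)" for x
  proof (rule endo_span_into_subspace[OF lin _ subspace_flag[of \<nu>]])
    show "x \<in> span (v ` {..<\<nu>+m})" using that perp_span by simp
    have "u (v j) \<in> F \<nu>" if "j < \<nu> + m" for j
      using mat_of_forced_zero_imp_in_flag[OF Z that] flag_mono[of "min j \<nu>" \<nu>] by auto
    then show "u ` v ` {..<\<nu> + m} \<subseteq> F \<nu>" by auto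
  qed simp
  ultimately show ?thesis unfolding flag_triangular_def by blast
qed

lemma flag_triangular_lowers_flag:
  assumes lin: "Vector_Spaces.linear scale scale u" and tri: "flag_triangular u"
    and i: "i < \<nu>" and y: "y \<in> F (Suc i)"
  shows "u y \<in> F i"
proof (rule endo_span_into_subspace[OF lin _ subspace_flag])
  show "y \<in> span (v ` {..<Suc i})" using y flag_span[of "Suc i"] i by simp
  show "u ` v ` {..<Suc i} \<subseteq> F i"
  proof
    fix z assume "z \<in> u ` v ` {..<Suc i}"
    then obtain l where l: "l < Suc i" "z = u (v l)" by blast
    then show "z \<in> F i" using tri flag_mono[of l i] i unfolding flag_triangular_def by auto
  qed
qed (use i in simp)

lemma flag_triangular_imp_stable:
  assumes lin: "Vector_Spaces.linear scale scale u" and tri: "flag_triangular u"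
  shows "stabilizes_flag u F \<nu>"
  unfolding stabilizes_flag_def
proof (intro allI impI)
  fix i assume i: "i \<le> \<nu>"
  show "u ` F i \<subseteq> F i"
  proof (cases i)
    case 0
    then show ?thesis using flag_0 endo_zero[OF lin] by simp
  next
    case (Suc i')
    then show ?thesis using flag_triangular_lowers_flag[OF lin tri, of i'] flag_mono[of i' "Suc i'"] i
      by auto
  qed
qed

lemma flag_triangular_raises_perp:
  assumes adj: "orth_symmetric u" and tri: "flag_triangular u"
    and i: "i < \<nu>" and x: "x \<in> perp b (F i)"
  shows "u x \<in> perp b (F (Suc i))"
  unfolding perp_def
proof (intro CollectI ballI)
  fix y assume "y \<in> F (Suc i)"
  then have y: "y \<in> span (v ` {..<Suc i})" using flag_span[of "Suc i"] i by simp
  show "b y (u x) = 0"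
  proof (rule b_span_left_eq_0[OF y])
    fix s assume "s \<in> v ` {..<Suc i}"
    then obtain l where l: "l < Suc i" "s = v l" by blast
    then have "u (v l) \<in> F i" using tri flag_mono[of l i] i unfolding flag_triangular_def by auto
    then have "b x (u (v l)) = 0" using perp_right[OF x] by blast
    then show "b s (u x) = 0" using adj l unfolding orth_symmetric_def by blast
  qed
qed

text \<open>\<open>u\<^sup>\<nu>\<close> maps everything into \<open>F \<nu>\<^sup>\<bottom>\<close>, \<open>u\<close> maps \<open>F \<nu>\<^sup>\<bottom>\<close> into \<open>F \<nu>\<close>,
  and \<open>u\<^sup>\<nu>\<close> kills \<open>F \<nu>\<close>.\<close>

lemma flag_triangular_imp_nilpotent:
  assumes lin: "Vector_Spaces.linear scale scale u" and adj: "orth_symmetric u"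
    and tri: "flag_triangular u"
  shows "nilpotent_end u"
proof -
  have into_perp: "(u^^t) x \<in> perp b (F t)" if "t \<le> \<nu>" for t x
    using that
  proof (induction t)
    case 0
    then show ?case using flag_0 by (simp add: perp_def)
  next
    case (Suc t)
    then show ?case using flag_triangular_raises_perp[OF adj tri, of t "(u^^t) x"] by simp
  qed
  have down_flag: "(u^^t) y \<in> F (\<nu> - t)" if "t \<le> \<nu>" "y \<in> F \<nu>" for t y
    using that
  proof (induction t)
    case 0
    then show ?case by simp
  next
    case (Suc t)
    then have "(u^^t) y \<in> F (Suc (\<nu> - Suc t))" by (simp add: Suc_diff_Suc)
    then show ?case using flag_triangular_lowers_flag[OF lin tri, of "\<nu> - Suc t" "(u^^t) y"] Suc by simp
  qed
  have "u ^^ (\<nu> + Suc \<nu>) = (\<lambda>_. 0)"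
  proof
    fix x
    have "u ((u^^\<nu>) x) \<in> F \<nu>" using into_perp[of \<nu>] tri unfolding flag_triangular_def by blast
    then have "(u^^\<nu>) (u ((u^^\<nu>) x)) \<in> F 0" using down_flag[of \<nu>] by simp
    then show "(u ^^ (\<nu> + Suc \<nu>)) x = 0" using flag_0 by (simp add: funpow_add funpow_swap1)
  qed
  then show ?thesis unfolding nilpotent_end_def by blast
qed

section \<open>Matrix description of WS and WA\<close>

definition sym_mat :: "(nat \<Rightarrow> nat \<Rightarrow> 'a) \<Rightarrow> bool" where
  "sym_mat M \<longleftrightarrow> (\<forall>i<n. \<forall>j<n. M i j = M j i)"
definition alt_mat :: "(nat \<Rightarrow> nat \<Rightarrow> 'a) \<Rightarrow> bool" where
  "alt_mat M \<longleftrightarrow> (\<forall>i<n. M i i = 0) \<and> (\<forall>i<n. \<forall>j<n. M i j = - M j i)"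
definition zero_on_forced :: "(nat \<Rightarrow> nat \<Rightarrow> 'a) \<Rightarrow> bool" where
  "zero_on_forced M \<longleftrightarrow> (\<forall>i<n. \<forall>j<n. forced_zero i j \<longrightarrow> M i j = 0)"

lemma alternating_endo_skew:
  assumes lin: "Vector_Spaces.linear scale scale u" and alt: "\<And>x. b x (u x) = 0"
  shows "b x (u y) = - b y (u x)"
proof -
  have "0 = b (x + y) (u (x + y))" using alt by simp
  also have "\<dots> = b x (u x) + b x (u y) + b y (u x) + b y (u y)"
    by (simp add: endo_add[OF lin] b_simps)
  finally show ?thesis using alt by (simp add: eq_neg_iff_add_eq_0)
qed

lemma orth_symmetric_nilpotent_stable_mat_of:
  assumes "Vector_Spaces.linear scale scale u" and "orth_symmetric u"
    and "nilpotent_end u" and "stabilizes_flag u F \<nu>"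
  shows "zero_on_forced (mat_of u)"
  using flag_triangular_mat_of_forced_zero[OF nilpotent_stable_imp_flag_triangular[OF assms]]
  unfolding zero_on_forced_def by blast

lemma WS_mat_of:
  assumes "u \<in> WS scale b F \<nu>"
  shows "sym_mat (mat_of u) \<and> zero_on_forced (mat_of u)"
proof -
  have lin: "Vector_Spaces.linear scale scale u" and sy: "\<And>x y. b x (u y) = b y (u x)"
    and nil: "nilpotent_end u" and st: "stabilizes_flag u F \<nu>"
    using assms unfolding WS_def b_symmetric_end_def End_def by auto
  have "orth_symmetric u" unfolding orth_symmetric_def using sy by simp
  then have "zero_on_forced (mat_of u)" by (rule orth_symmetric_nilpotent_stable_mat_of[OF lin _ nil st])
  moreover have "sym_mat (mat_of u)" unfolding sym_mat_def mat_of_def using sy by simp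
  ultimately show ?thesis by simp
qed

lemma WA_mat_of:
  assumes "u \<in> WA scale b F \<nu>"
  shows "alt_mat (mat_of u) \<and> zero_on_forced (mat_of u)"
proof -
  have lin: "Vector_Spaces.linear scale scale u" and al: "\<And>x. b x (u x) = 0"
    and nil: "nilpotent_end u" and st: "stabilizes_flag u F \<nu>"
    using assms unfolding WA_def b_alternating_end_def End_def by auto
  have sk: "b x (u y) = - b y (u x)" for x y using alternating_endo_skew[OF lin al] .
  have "orth_symmetric u" unfolding orth_symmetric_def
  proof (intro allI)
    fix x y show "(b x (u y) = 0) = (b y (u x) = 0)" using sk[of x y] by simp
  qed
  then have "zero_on_forced (mat_of u)" by (rule orth_symmetric_nilpotent_stable_mat_of[OF lin _ nil st])
  moreover have "alt_mat (mat_of u)" unfolding alt_mat_def mat_of_def using al sk by blast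
  ultimately show ?thesis by simp
qed

lemma endo_of_flag_triangular: "zero_on_forced M \<Longrightarrow> flag_triangular (endo_of M)"
  by (rule mat_of_forced_zero_imp_flag_triangular[OF linear_endo_of])
    (simp add: mat_of_endo_of zero_on_forced_def)

lemma endo_of_nilpotent_stable:
  assumes "orth_symmetric (endo_of M)" and "zero_on_forced M"
  shows "nilpotent_end (endo_of M) \<and> stabilizes_flag (endo_of M) F \<nu>"
  using flag_triangular_imp_nilpotent[OF linear_endo_of assms(1)]
    flag_triangular_imp_stable[OF linear_endo_of] endo_of_flag_triangular[OF assms(2)] by blast

lemma endo_of_in_WS:
  assumes "sym_mat M" and "zero_on_forced M"
  shows "endo_of M \<in> WS scale b F \<nu>"
proof -
  have sy: "b x (endo_of M y) = b y (endo_of M x)" for x y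
  proof -
    have "b x (endo_of M y) = (\<Sum>j<n. \<Sum>k<n. b (w' j) y * M k j * b (w' k) x)" by (rule b_endo_of)
    also have "\<dots> = (\<Sum>k<n. \<Sum>j<n. b (w' j) y * M k j * b (w' k) x)" by (rule sum.swap)
    also have "\<dots> = (\<Sum>k<n. \<Sum>j<n. b (w' k) x * M j k * b (w' j) y)"
      using assms(1) unfolding sym_mat_def by (intro sum.cong refl) (simp add: mult.commute)
    also have "\<dots> = b y (endo_of M x)" by (rule b_endo_of[symmetric])
    finally show ?thesis .
  qed
  have adj: "orth_symmetric (endo_of M)" unfolding orth_symmetric_def using sy by simp
  have "nilpotent_end (endo_of M) \<and> stabilizes_flag (endo_of M) F \<nu>"
    using endo_of_nilpotent_stable[OF adj assms(2)] .
  then show ?thesis unfolding WS_def b_symmetric_end_def End_def using linear_endo_of sy by auto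
qed

lemma endo_of_in_WA:
  assumes "alt_mat M" and "zero_on_forced M"
  shows "endo_of M \<in> WA scale b F \<nu>"
proof -
  have al: "b x (endo_of M x) = 0" for x
  proof -
    have "b x (endo_of M x) = (\<Sum>j<n. \<Sum>k<n. b (w' j) x * M k j * b (w' k) x)" by (rule b_endo_of)
    also have "\<dots> = 0"
    proof (rule skew_quadratic_sum_eq_0)
      show "\<forall>i<n. M i i = 0" "\<forall>i<n. \<forall>j<n. M i j = - M j i" using assms(1) unfolding alt_mat_def by blast+
    qed
    finally show ?thesis .
  qed
  have sk: "b x (endo_of M y) = - b y (endo_of M x)" for x y using alternating_endo_skew[OF linear_endo_of al] .
  have adj: "orth_symmetric (endo_of M)" unfolding orth_symmetric_def
  proof (intro allI)
    fix x y show "(b x (endo_of M y) = 0) = (b y (endo_of M x) = 0)" using sk[of x y] by simp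
  qed
  have "nilpotent_end (endo_of M) \<and> stabilizes_flag (endo_of M) F \<nu>"
    using endo_of_nilpotent_stable[OF adj assms(2)] .
  then show ?thesis unfolding WA_def b_alternating_end_def End_def using linear_endo_of al by auto
qed

lemma endo_of_cong: "(\<And>i j. i < n \<Longrightarrow> j < n \<Longrightarrow> M i j = M' i j) \<Longrightarrow> endo_of M = endo_of M'"
  unfolding endo_of_def by (intro ext sum.cong refl) auto

lemma endo_of_sum: "endo_of (\<lambda>i j. \<Sum>p\<in>P. c p * B p i j) = (\<Sum>p\<in>P. end_scale scale (c p) (endo_of (B p)))"
proof
  fix x
  have "(\<Sum>p\<in>P. end_scale scale (c p) (endo_of (B p))) x = (\<Sum>p\<in>P. c p *s endo_of (B p) x)"
    by (simp add: sum_apply end_scale_def)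
  also have "\<dots> = (\<Sum>p\<in>P. \<Sum>j<n. \<Sum>k<n. (c p * (b (w' j) x * B p k j)) *s w k)"
    unfolding endo_of_def by (simp add: scale_sum_right)
  also have "\<dots> = (\<Sum>j<n. \<Sum>p\<in>P. \<Sum>k<n. (c p * (b (w' j) x * B p k j)) *s w k)"
    by (rule sum.swap)
  also have "\<dots> = (\<Sum>j<n. \<Sum>k<n. \<Sum>p\<in>P. (c p * (b (w' j) x * B p k j)) *s w k)"
    by (intro sum.cong refl sum.swap)
  also have "\<dots> = endo_of (\<lambda>i j. \<Sum>p\<in>P. c p * B p i j) x"
    unfolding endo_of_def
    by (intro sum.cong refl) (simp add: sum_distrib_left scale_sum_left algebra_simps)
  finally show "endo_of (\<lambda>i j. \<Sum>p\<in>P. c p * B p i j) x = (\<Sum>p\<in>P. end_scale scale (c p) (endo_of (B p))) x" by simp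
qed

lemma mat_of_endo_of_combination:
  assumes "finite P" and "p \<in> P" and "fst p < n" and "snd p < n"
    and delta: "\<And>q. q \<in> P \<Longrightarrow> B q (fst p) (snd p) = (if q = p then 1 else 0)"
  shows "mat_of (endo_of (\<lambda>i j. \<Sum>q\<in>P. c q * B q i j)) (fst p) (snd p) = c p"
proof -
  have "mat_of (endo_of (\<lambda>i j. \<Sum>q\<in>P. c q * B q i j)) (fst p) (snd p) = (\<Sum>q\<in>P. c q * B q (fst p) (snd p))"
    using assms by (simp add: mat_of_endo_of)
  also have "\<dots> = (\<Sum>q\<in>P. if q = p then c p else 0)"
    by (intro sum.cong refl) (simp add: delta)
  also have "\<dots> = c p" using assms by simp
  finally show ?thesis .
qed

lemma subspace_dim_eq_card_positions:
  fixes S :: "('v \<Rightarrow> 'v) set" and P :: "(nat \<times> nat) set" and B :: "nat \<times> nat \<Rightarrow> nat \<Rightarrow> nat \<Rightarrow> 'a"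
  assumes finP: "finite P" and Pn: "\<And>p. p \<in> P \<Longrightarrow> fst p < n \<and> snd p < n"
    and delta: "\<And>p q. p \<in> P \<Longrightarrow> q \<in> P \<Longrightarrow> B q (fst p) (snd p) = (if q = p then 1 else 0)"
    and inS: "\<And>c. endo_of (\<lambda>i j. \<Sum>p\<in>P. c p * B p i j) \<in> S"
    and spS: "\<And>u. u \<in> S \<Longrightarrow> \<exists>c. u = endo_of (\<lambda>i j. \<Sum>p\<in>P. c p * B p i j)"
  shows "module.subspace (end_scale scale) S \<and> vector_space.dim (end_scale scale) S = card P"
proof -
  interpret es: vector_space "end_scale scale" by (rule vector_space_end_scale[OF vector_space_axioms])
  have ev: "mat_of (endo_of (\<lambda>i j. \<Sum>q\<in>P. c q * B q i j)) (fst p) (snd p) = c p" if "p \<in> P" for c p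
    using mat_of_endo_of_combination[OF finP that] Pn[OF that] delta[OF that] by blast
  have inj: "inj_on (\<lambda>p. endo_of (B p)) P"
  proof (rule inj_onI)
    fix p q assume pq: "p \<in> P" "q \<in> P" "endo_of (B p) = endo_of (B q)"
    then have "B p (fst q) (snd q) = B q (fst q) (snd q)" using mat_of_endo_of Pn by metis
    then show "p = q" using delta[OF pq(2) pq(1)] delta[OF pq(2) pq(2)] by (auto split: if_splits)
  qed
  define BS where "BS = (\<lambda>p. endo_of (B p)) ` P"
  have finBS: "finite BS" unfolding BS_def using finP by simp
  have reidx: "(\<Sum>\<phi>\<in>BS. end_scale scale (c \<phi>) \<phi>) = endo_of (\<lambda>i j. \<Sum>p\<in>P. c (endo_of (B p)) * B p i j)" for c
    unfolding BS_def using inj by (simp add: sum.reindex endo_of_sum)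
  have spanBS: "es.span BS = S"
  proof
    show "es.span BS \<subseteq> S"
      unfolding es.span_finite[OF finBS] using reidx inS by auto
    show "S \<subseteq> es.span BS"
    proof
      fix u assume "u \<in> S"
      then obtain c where c: "u = endo_of (\<lambda>i j. \<Sum>p\<in>P. c p * B p i j)" using spS by blast
      have "u = (\<Sum>p\<in>P. end_scale scale (c p) (endo_of (B p)))" using c endo_of_sum by simp
      also have "\<dots> \<in> es.span BS"
        unfolding BS_def by (intro es.span_sum es.span_scale es.span_base) auto
      finally show "u \<in> es.span BS" .
    qed
  qed
  have indep: "\<not> es.dependent BS"
  proof
    assume "es.dependent BS"
    then obtain c where c: "\<exists>\<phi>\<in>BS. c \<phi> \<noteq> 0" "(\<Sum>\<phi>\<in>BS. end_scale scale (c \<phi>) \<phi>) = 0"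
      using es.dependent_finite[OF finBS] by blast
    obtain p where p: "p \<in> P" "c (endo_of (B p)) \<noteq> 0" using c(1) unfolding BS_def by blast
    have "endo_of (\<lambda>i j. \<Sum>q\<in>P. c (endo_of (B q)) * B q i j) = (\<lambda>_. 0)" using c(2) reidx by (simp add: zero_fun_def)
    then have "mat_of (endo_of (\<lambda>i j. \<Sum>q\<in>P. c (endo_of (B q)) * B q i j)) (fst p) (snd p) = 0" by (simp add: mat_of_def)
    then show False using ev[OF p(1), of "\<lambda>q. c (endo_of (B q))"] p(2) by simp
  qed
  have "es.dim S = card BS" using es.dim_span_eq_card_independent[OF indep] spanBS by simp
  also have "card BS = card P" unfolding BS_def using inj by (simp add: card_image)
  finally show ?thesis using spanBS es.subspace_span by metis
qed

definition sym_pos :: "(nat \<times> nat) set" where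
  "sym_pos = {(i, j). j < n \<and> \<nu>+m \<le> j \<and> j - (\<nu>+m) < i \<and> i \<le> j}"
definition alt_pos :: "(nat \<times> nat) set" where
  "alt_pos = {(i, j). j < n \<and> \<nu>+m \<le> j \<and> j - (\<nu>+m) < i \<and> i < j}"

definition sym_unit :: "nat \<times> nat \<Rightarrow> nat \<Rightarrow> nat \<Rightarrow> 'a" where
  "sym_unit p i j = (if p = (i, j) \<or> p = (j, i) then 1 else 0)"
definition unit_mat :: "nat \<times> nat \<Rightarrow> nat \<Rightarrow> nat \<Rightarrow> 'a" where
  "unit_mat p i j = (if p = (i, j) then 1 else 0)"
definition alt_unit :: "nat \<times> nat \<Rightarrow> nat \<Rightarrow> nat \<Rightarrow> 'a" where
  "alt_unit p i j = unit_mat p i j - unit_mat p j i"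

lemma sym_pos_image: "sym_pos = (\<lambda>(k, i). (i, \<nu>+m+k)) ` (SIGMA k:{..<\<nu>}. {k<..\<nu>+m+k})"
proof
  show "sym_pos \<subseteq> (\<lambda>(k, i). (i, \<nu>+m+k)) ` (SIGMA k:{..<\<nu>}. {k<..\<nu>+m+k})"
  proof
    fix p assume "p \<in> sym_pos"
    then obtain i j where p: "p = (i, j)" "j < n" "\<nu>+m \<le> j" "j - (\<nu>+m) < i" "i \<le> j"
      unfolding sym_pos_def by blast
    then have "(j - (\<nu>+m), i) \<in> (SIGMA k:{..<\<nu>}. {k<..\<nu>+m+k})" by auto
    moreover have "p = (\<lambda>(k, i). (i, \<nu>+m+k)) (j - (\<nu>+m), i)" using p by auto
    ultimately show "p \<in> (\<lambda>(k, i). (i, \<nu>+m+k)) ` (SIGMA k:{..<\<nu>}. {k<..\<nu>+m+k})" by blast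
  qed
  show "(\<lambda>(k, i). (i, \<nu>+m+k)) ` (SIGMA k:{..<\<nu>}. {k<..\<nu>+m+k}) \<subseteq> sym_pos"
    unfolding sym_pos_def by auto
qed

lemma alt_pos_image: "alt_pos = (\<lambda>(k, i). (i, \<nu>+m+k)) ` (SIGMA k:{..<\<nu>}. {k<..<\<nu>+m+k})"
proof
  show "alt_pos \<subseteq> (\<lambda>(k, i). (i, \<nu>+m+k)) ` (SIGMA k:{..<\<nu>}. {k<..<\<nu>+m+k})"
  proof
    fix p assume "p \<in> alt_pos"
    then obtain i j where p: "p = (i, j)" "j < n" "\<nu>+m \<le> j" "j - (\<nu>+m) < i" "i < j"
      unfolding alt_pos_def by blast
    then have "(j - (\<nu>+m), i) \<in> (SIGMA k:{..<\<nu>}. {k<..<\<nu>+m+k})" by auto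
    moreover have "p = (\<lambda>(k, i). (i, \<nu>+m+k)) (j - (\<nu>+m), i)" using p by auto
    ultimately show "p \<in> (\<lambda>(k, i). (i, \<nu>+m+k)) ` (SIGMA k:{..<\<nu>}. {k<..<\<nu>+m+k})" by blast
  qed
  show "(\<lambda>(k, i). (i, \<nu>+m+k)) ` (SIGMA k:{..<\<nu>}. {k<..<\<nu>+m+k}) \<subseteq> alt_pos"
    unfolding alt_pos_def by auto
qed

lemma inj_on_pos_pair: "inj_on (\<lambda>(k, i). (i, \<nu>+m+k)) A"
  by (rule inj_onI) auto

lemma card_sym_pos: "card sym_pos = \<nu> * (\<nu>+m)"
proof -
  have "card sym_pos = card (SIGMA k:{..<\<nu>}. {k<..\<nu>+m+k})"
    unfolding sym_pos_image by (rule card_image[OF inj_on_pos_pair])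
  also have "\<dots> = (\<Sum>k<\<nu>. card {k<..\<nu>+m+k})" by (simp add: card_SigmaI)
  also have "\<dots> = \<nu> * (\<nu>+m)" by simp
  finally show ?thesis .
qed

lemma card_alt_pos: "card alt_pos = \<nu> * (\<nu>+m-1)"
proof -
  have "card alt_pos = card (SIGMA k:{..<\<nu>}. {k<..<\<nu>+m+k})"
    unfolding alt_pos_image by (rule card_image[OF inj_on_pos_pair])
  also have "\<dots> = (\<Sum>k<\<nu>. card {k<..<\<nu>+m+k})" by (simp add: card_SigmaI)
  also have "\<dots> = (\<Sum>k<\<nu>. \<nu>+m-1)" by (intro sum.cong refl) simp
  also have "\<dots> = \<nu> * (\<nu>+m-1)" by simp
  finally show ?thesis .
qed

lemma finite_sym_pos: "finite sym_pos" unfolding sym_pos_image by simp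
lemma finite_alt_pos: "finite alt_pos" unfolding alt_pos_image by simp

lemma sym_pos_not_forced: "(i, j) \<in> sym_pos \<Longrightarrow> \<not> forced_zero i j \<and> \<not> forced_zero j i"
  unfolding sym_pos_def forced_zero_def by auto
lemma alt_pos_not_forced: "(i, j) \<in> alt_pos \<Longrightarrow> \<not> forced_zero i j \<and> \<not> forced_zero j i"
  unfolding alt_pos_def forced_zero_def by auto

lemma alt_pos_cover: "i < n \<Longrightarrow> j < n \<Longrightarrow> i \<noteq> j \<Longrightarrow> (i, j) \<notin> alt_pos \<Longrightarrow> (j, i) \<notin> alt_pos \<Longrightarrow> forced_zero i j \<or> forced_zero j i"
  unfolding alt_pos_def forced_zero_def by auto

lemma sym_pos_cover: "i < n \<Longrightarrow> j < n \<Longrightarrow> (i, j) \<notin> sym_pos \<Longrightarrow> (j, i) \<notin> sym_pos \<Longrightarrow> forced_zero i j \<or> forced_zero j i"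
  unfolding sym_pos_def forced_zero_def by auto

lemma sym_pos_bound: "p \<in> sym_pos \<Longrightarrow> fst p < n \<and> snd p < n" unfolding sym_pos_def by auto
lemma alt_pos_bound: "p \<in> alt_pos \<Longrightarrow> fst p < n \<and> snd p < n" unfolding alt_pos_def by auto

lemma sum_sym_unit: "(\<Sum>p\<in>sym_pos. c p * sym_unit p i j) = (\<Sum>p\<in>sym_pos \<inter> {(i, j), (j, i)}. c p)"
  unfolding sym_unit_def using finite_sym_pos by (simp add: sum.inter_restrict if_distrib cong: if_cong)

lemma sum_unit_mat: "(\<Sum>p\<in>P. c p * unit_mat p i j) = (if (i, j) \<in> P then c (i, j) else 0)" if "finite P"
proof -
  have "(\<Sum>p\<in>P. c p * unit_mat p i j) = (\<Sum>p\<in>P. if p = (i, j) then c (i, j) else 0)"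
    unfolding unit_mat_def by (intro sum.cong refl) simp
  also have "\<dots> = (if (i, j) \<in> P then c (i, j) else 0)" using that by simp
  finally show ?thesis .
qed

lemma sum_alt_unit: "(\<Sum>p\<in>alt_pos. c p * alt_unit p i j)
   = (if (i, j) \<in> alt_pos then c (i, j) else 0) - (if (j, i) \<in> alt_pos then c (j, i) else 0)"
proof -
  have "(\<Sum>p\<in>alt_pos. c p * alt_unit p i j) = (\<Sum>p\<in>alt_pos. c p * unit_mat p i j) - (\<Sum>p\<in>alt_pos. c p * unit_mat p j i)"
    unfolding alt_unit_def by (simp add: right_diff_distrib sum_subtractf)
  then show ?thesis using sum_unit_mat[OF finite_alt_pos] by simp
qed

lemma sym_mat_eq_sum_sym_unit:
  assumes M: "sym_mat M" "zero_on_forced M" and ij: "i < n" "j < n"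
  shows "M i j = (\<Sum>p\<in>sym_pos. M (fst p) (snd p) * sym_unit p i j)"
proof (cases "(i, j) \<in> sym_pos")
  case True
  have "sym_pos \<inter> {(i, j), (j, i)} = {(i, j)}" using True unfolding sym_pos_def by auto
  then show ?thesis unfolding sum_sym_unit by simp
next
  case f1: False
  have symM: "M j i = M i j" using M(1) ij unfolding sym_mat_def by blast
  show ?thesis
  proof (cases "(j, i) \<in> sym_pos")
    case True
    have "sym_pos \<inter> {(i, j), (j, i)} = {(j, i)}" using True f1 by auto
    then show ?thesis unfolding sum_sym_unit using symM by simp
  next
    case False
    then have "sym_pos \<inter> {(i, j), (j, i)} = {}" using f1 by auto
    moreover have "forced_zero i j \<or> forced_zero j i" using sym_pos_cover[OF ij f1 False] .
    then have "M i j = 0" using M(2) ij symM unfolding zero_on_forced_def by auto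
    ultimately show ?thesis unfolding sum_sym_unit by simp
  qed
qed

lemma alt_mat_eq_sum_alt_unit:
  assumes M: "alt_mat M" "zero_on_forced M" and ij: "i < n" "j < n"
  shows "M i j = (\<Sum>p\<in>alt_pos. M (fst p) (snd p) * alt_unit p i j)"
proof -
  have skew: "M i j = - M j i" and diag: "M i i = 0" using M(1) ij unfolding alt_mat_def by blast+
  show ?thesis
  proof (cases "(i, j) \<in> alt_pos")
    case True
    then have "(j, i) \<notin> alt_pos" unfolding alt_pos_def by auto
    then show ?thesis unfolding sum_alt_unit using True by simp
  next
    case f1: False
    show ?thesis
    proof (cases "(j, i) \<in> alt_pos")
      case True
      then show ?thesis unfolding sum_alt_unit using f1 skew by simp
    next
      case False
      have "M i j = 0"
      proof (cases "i = j")
        case True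
        then show ?thesis using diag by simp
      next
        case False
        then have "forced_zero i j \<or> forced_zero j i" using alt_pos_cover[OF ij _ f1] \<open>(j, i) \<notin> alt_pos\<close> by blast
        then show ?thesis using M(2) ij skew unfolding zero_on_forced_def by auto
      qed
      then show ?thesis unfolding sum_alt_unit using f1 False by simp
    qed
  qed
qed

lemma WS_dim: "module.subspace (end_scale scale) (WS scale b F \<nu>)
   \<and> vector_space.dim (end_scale scale) (WS scale b F \<nu>) = \<nu> * (\<nu>+m)"
  unfolding card_sym_pos[symmetric]
proof (rule subspace_dim_eq_card_positions[OF finite_sym_pos sym_pos_bound])
  fix p q assume pq: "p \<in> sym_pos" "q \<in> sym_pos"
  then show "sym_unit q (fst p) (snd p) = (if q = p then 1 else 0)"
    unfolding sym_unit_def sym_pos_def by auto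
next
  fix c
  define M where "M = (\<lambda>i j. \<Sum>p\<in>sym_pos. c p * sym_unit p i j)"
  have "sym_mat M" unfolding sym_mat_def M_def sym_unit_def by (auto intro!: sum.cong)
  moreover have "zero_on_forced M" unfolding zero_on_forced_def
  proof (intro allI impI)
    fix i j assume "i < n" "j < n" "forced_zero i j"
    then have "sym_pos \<inter> {(i, j), (j, i)} = {}" using sym_pos_not_forced by auto
    then show "M i j = 0" unfolding M_def sum_sym_unit by simp
  qed
  ultimately show "endo_of (\<lambda>i j. \<Sum>p\<in>sym_pos. c p * sym_unit p i j) \<in> WS scale b F \<nu>"
    using endo_of_in_WS unfolding M_def by blast
next
  fix u assume u: "u \<in> WS scale b F \<nu>"
  have lin: "Vector_Spaces.linear scale scale u" using u unfolding WS_def b_symmetric_end_def End_def by auto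
  have sz: "sym_mat (mat_of u)" "zero_on_forced (mat_of u)" using WS_mat_of[OF u] by auto
  have "u = endo_of (mat_of u)" using endo_of_mat_of[OF lin] by simp
  also have "\<dots> = endo_of (\<lambda>i j. \<Sum>p\<in>sym_pos. mat_of u (fst p) (snd p) * sym_unit p i j)"
    by (rule endo_of_cong) (rule sym_mat_eq_sum_sym_unit[OF sz])
  finally show "\<exists>c. u = endo_of (\<lambda>i j. \<Sum>p\<in>sym_pos. c p * sym_unit p i j)"
    by (rule exI[of _ "\<lambda>p. mat_of u (fst p) (snd p)"])
qed

lemma WA_dim: "module.subspace (end_scale scale) (WA scale b F \<nu>)
   \<and> vector_space.dim (end_scale scale) (WA scale b F \<nu>) = \<nu> * (\<nu>+m-1)"
  unfolding card_alt_pos[symmetric]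
proof (rule subspace_dim_eq_card_positions[OF finite_alt_pos alt_pos_bound])
  fix p q assume pq: "p \<in> alt_pos" "q \<in> alt_pos"
  then show "alt_unit q (fst p) (snd p) = (if q = p then 1 else 0)"
    unfolding alt_unit_def unit_mat_def alt_pos_def by auto
next
  fix c
  define M where "M = (\<lambda>i j. \<Sum>p\<in>alt_pos. c p * alt_unit p i j)"
  have "alt_mat M" unfolding alt_mat_def M_def sum_alt_unit by auto
  moreover have "zero_on_forced M" unfolding zero_on_forced_def
  proof (intro allI impI)
    fix i j assume "i < n" "j < n" "forced_zero i j"
    then have "(i, j) \<notin> alt_pos" "(j, i) \<notin> alt_pos" using alt_pos_not_forced by auto
    then show "M i j = 0" unfolding M_def sum_alt_unit by simp
  qed
  ultimately show "endo_of (\<lambda>i j. \<Sum>p\<in>alt_pos. c p * alt_unit p i j) \<in> WA scale b F \<nu>"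
    using endo_of_in_WA unfolding M_def by blast
next
  fix u assume u: "u \<in> WA scale b F \<nu>"
  have lin: "Vector_Spaces.linear scale scale u" using u unfolding WA_def b_alternating_end_def End_def by auto
  have sz: "alt_mat (mat_of u)" "zero_on_forced (mat_of u)" using WA_mat_of[OF u] by auto
  have "u = endo_of (mat_of u)" using endo_of_mat_of[OF lin] by simp
  also have "\<dots> = endo_of (\<lambda>i j. \<Sum>p\<in>alt_pos. mat_of u (fst p) (snd p) * alt_unit p i j)"
    by (rule endo_of_cong) (rule alt_mat_eq_sum_alt_unit[OF sz])
  finally show "\<exists>c. u = endo_of (\<lambda>i j. \<Sum>p\<in>alt_pos. c p * alt_unit p i j)"
    by (rule exI[of _ "\<lambda>p. mat_of u (fst p) (snd p)"])
qed

end

section \<open>Existence of an adapted basis\<close>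

lemma sum_lessThan_add: "(\<Sum>i<a + (c::nat). f i) = (\<Sum>i<a. f i) + (\<Sum>k<c. f (a + k))"
  by (induction c) (simp_all add: add.assoc)

definition family_append :: "(nat \<Rightarrow> 'v) \<Rightarrow> nat \<Rightarrow> (nat \<Rightarrow> 'v) \<Rightarrow> nat \<Rightarrow> 'v" where
  "family_append v N f i = (if i < N then v i else f (i - N))"

context finite_dimensional_vector_space
begin

lemma flag_basis_of_steps:
  assumes flag: "is_flag scale F p" and pc: "partially_complete scale F p"
    and e: "\<And>i. i < p \<Longrightarrow> e i \<in> F (Suc i) \<and> e i \<notin> F i"
    and "i \<le> p"
  shows "F i = span (e ` {..<i}) \<and> independent (e ` {..<i}) \<and> inj_on e {..<i}"
proof -
  have Fdim: "dim (F i) = i" if "i \<le> p" for i using pc that unfolding partially_complete_def by blast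
  have Fsub: "subspace (F i)" if "i \<le> p" for i using flag that unfolding is_flag_def by blast
  show ?thesis
    using \<open>i \<le> p\<close>
  proof (induction i)
    case 0
    have "F 0 \<subseteq> {0}" using Fdim[of 0] by simp
    moreover have "0 \<in> F 0" using Fsub[of 0] by (simp add: subspace_0)
    ultimately have "F 0 = {0}" by blast
    then show ?case by (simp add: span_empty independent_empty)
  next
    case (Suc i)
    then have i: "i < p" by simp
    have IH: "F i = span (e ` {..<i})" "independent (e ` {..<i})" "inj_on e {..<i}" using Suc by auto
    have eo: "e i \<notin> span (e ` {..<i})" using e[OF i] IH(1) by simp
    have ins: "e ` {..<Suc i} = insert (e i) (e ` {..<i})" by (simp add: lessThan_Suc)
    have indep: "independent (e ` {..<Suc i})" unfolding ins using independent_insertI[OF eo IH(2)] .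
    have inj: "inj_on e {..<Suc i}"
      unfolding lessThan_Suc using IH(3) eo span_base by (fastforce simp: inj_on_insert)
    have sub: "span (e ` {..<Suc i}) \<subseteq> F (Suc i)"
    proof (rule span_minimal)
      show "subspace (F (Suc i))" using Fsub Suc by simp
      have "e ` {..<i} \<subseteq> F i" unfolding IH(1) by (rule span_superset)
      moreover have "F i \<subseteq> F (Suc i)" using flag i unfolding is_flag_def by blast
      ultimately show "e ` {..<Suc i} \<subseteq> F (Suc i)" unfolding ins using e[OF i] by blast
    qed
    have "dim (span (e ` {..<Suc i})) = Suc i"
      using dim_span_eq_card_independent[OF indep] card_image[OF inj] by simp
    then have "span (e ` {..<Suc i}) = F (Suc i)"
      using subspace_dim_equal[OF subspace_span Fsub[of "Suc i"] sub] Suc Fdim[of "Suc i"] by simp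
    then show ?case using indep inj by simp
  qed
qed

lemma flag_basis_exists:
  assumes flag: "is_flag scale F p" and pc: "partially_complete scale F p"
  obtains e where "\<And>i. i \<le> p \<Longrightarrow> F i = span (e ` {..<i})"
    and "inj_on e {..<p}" and "independent (e ` {..<p})" and "\<And>j. j < p \<Longrightarrow> e j \<notin> F j"
proof -
  define e where "e i = (SOME x. x \<in> F (Suc i) \<and> x \<notin> F i)" for i
  have e: "e i \<in> F (Suc i) \<and> e i \<notin> F i" if i: "i < p" for i
  proof -
    have "F i \<noteq> F (Suc i)"
      using pc i unfolding partially_complete_def by (metis Suc_leI less_imp_le_nat n_not_Suc_n)
    moreover have "F i \<subseteq> F (Suc i)" using flag i unfolding is_flag_def by blast
    ultimately have "\<exists>x. x \<in> F (Suc i) \<and> x \<notin> F i" by blast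
    then show ?thesis unfolding e_def by (rule someI_ex)
  qed
  have "F i = span (e ` {..<i})" if "i \<le> p" for i
    using flag_basis_of_steps[OF flag pc e that] by blast
  moreover have "inj_on e {..<p}" "independent (e ` {..<p})"
    using flag_basis_of_steps[OF flag pc e order_refl] by blast+
  moreover have "e j \<notin> F j" if "j < p" for j using e[OF that] by blast
  ultimately show thesis by (rule that)
qed

lemma independent_family_extend:
  fixes e :: "nat \<Rightarrow> 'b" and K :: nat
  assumes P: "subspace P" and eP: "e ` {..<K} \<subseteq> P"
    and inj: "inj_on e {..<K}" and indep: "independent (e ` {..<K})"
  obtains m v where "\<And>i. i < K \<Longrightarrow> v i = e i" and "inj_on v {..<K+m}"
    and "independent (v ` {..<K+m})" and "span (v ` {..<K+m}) = P"
proof -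
  obtain B where B: "e ` {..<K} \<subseteq> B" "B \<subseteq> P" "independent B" "P \<subseteq> span B"
    using maximal_independent_subset_extend[OF eP indep] by blast
  have finB: "finite B" using finiteI_independent[OF B(3)] .
  define m where "m = card (B - e ` {..<K})"
  obtain g where g: "bij_betw g {..<m} (B - e ` {..<K})"
    using ex_bij_betw_nat_finite[of "B - e ` {..<K}"] finB unfolding m_def by (auto simp: atLeast0LessThan)
  define v where "v = family_append e K g"
  have "v ` {..<K+m} = e ` {..<K} \<union> g ` {..<m}"
  proof -
    have "{..<K+m} = {..<K} \<union> (\<lambda>k. K + k) ` {..<m}"
    proof (intro set_eqI iffI)
      fix x assume "x \<in> {..<K+m}"
      then show "x \<in> {..<K} \<union> (\<lambda>k. K + k) ` {..<m}"
        by (cases "x < K") (auto intro!: image_eqI[of _ _ "x - K"])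
    qed auto
    moreover have "v ` {..<K} = e ` {..<K}" "v ` (\<lambda>k. K + k) ` {..<m} = g ` {..<m}"
      unfolding image_image by (auto simp: v_def family_append_def intro!: image_cong)
    ultimately show ?thesis by (simp add: image_Un)
  qed
  also have "\<dots> = B" using g B(1) unfolding bij_betw_def by auto
  finally have vB: "v ` {..<K+m} = B" .
  have "card B = K + m"
    using finB B(1) card_image[OF inj] unfolding m_def
    by (metis card_Diff_subset card_lessThan card_mono finite_subset le_add_diff_inverse)
  then have "inj_on v {..<K+m}" by (intro eq_card_imp_inj_on) (simp_all add: vB)
  moreover have "span (v ` {..<K+m}) = P"
    using vB B span_minimal[OF B(2) P] span_superset[of B] by blast
  moreover have "v i = e i" if "i < K" for i using that by (simp add: v_def family_append_def)
  ultimately show thesis using that vB B(3) by metis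
qed

end

lemma (in vector_space) sum_family_append:
  "(\<Sum>i<N + K. a i *s family_append v N f i) = (\<Sum>i<N. a i *s v i) + (\<Sum>k<K. a (N + k) *s f k)"
  by (simp add: sum_lessThan_add family_append_def)

context reflexive_form
begin

lemma left_dual_expansion:
  fixes N :: nat
  assumes span: "span (v ` {..<N}) = UNIV"
    and dual: "\<And>i j. i < N \<Longrightarrow> j < N \<Longrightarrow> b (w' j) (v i) = (if i = j then 1 else 0)"
  shows "x = (\<Sum>i<N. b (w' i) x *s v i)"
proof -
  obtain a where a: "x = (\<Sum>i<N. a i *s v i)"
    using span span_image_lessThan_imp_sum by blast
  have "b (w' j) x = a j" if "j < N" for j
  proof -
    have "b (w' j) x = (\<Sum>i<N. a i * b (w' j) (v i))" unfolding a by (simp add: b_simps)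
    also have "\<dots> = (\<Sum>i<N. if i = j then a j else 0)" using that by (intro sum.cong refl) (auto simp: dual)
    also have "\<dots> = a j" using that by simp
    finally show ?thesis .
  qed
  then show ?thesis using a by simp
qed

context
  fixes K m :: nat and v f :: "nat \<Rightarrow> 'v"
  assumes indep: "lin_indep_family v (K + m)"
    and perp_span: "perp b (span (v ` {..<K})) = span (v ` {..<K + m})"
    and dual: "\<And>i j. i < K \<Longrightarrow> j < K \<Longrightarrow> b (v i) (f j) = (if i = j then 1 else 0)"
begin

lemma b_sum_dual: "l < K \<Longrightarrow> b (v l) (\<Sum>k<K. a k *s f k) = a l"
proof -
  assume l: "l < K"
  have "b (v l) (\<Sum>k<K. a k *s f k) = (\<Sum>k<K. a k * b (v l) (f k))" by (simp add: b_simps)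
  also have "\<dots> = (\<Sum>k<K. if k = l then a l else 0)" using l by (intro sum.cong refl) (auto simp: dual)
  also have "\<dots> = a l" using l by simp
  finally show ?thesis .
qed

lemma b_perp_family: "l < K \<Longrightarrow> i < K + m \<Longrightarrow> b (v l) (v i) = 0"
  using perp_left[of "v i" "span (v ` {..<K})" "v l"] perp_span by (simp add: span_base)

lemma lin_indep_family_append: "lin_indep_family (family_append v (K + m) f) (K + m + K)"
  unfolding lin_indep_family_def
proof (intro allI impI)
  fix a i assume s: "(\<Sum>i<K + m + K. a i *s family_append v (K + m) f i) = 0" and i: "i < K + m + K"
  \<comment> \<open>Pairing with \<open>v l\<close> (\<open>l < K\<close>) kills the first block and reads off the coefficient of \<open>f l\<close>.\<close>
  have tail: "a (K + m + l) = 0" if l: "l < K" for l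
  proof -
    have "b (v l) (\<Sum>i<K + m. a i *s v i) = 0"
      using l by (simp add: b_sum_right b_scale_right b_perp_family)
    moreover have "b (v l) (\<Sum>k<K. a (K + m + k) *s f k) = a (K + m + l)"
      using b_sum_dual[OF l] .
    moreover have "0 = b (v l) (\<Sum>i<K + m + K. a i *s family_append v (K + m) f i)" using s by simp
    ultimately show ?thesis by (simp add: sum_family_append b_add_right)
  qed
  then have "(\<Sum>i<K + m. a i *s v i) = 0" using s by (simp add: sum_family_append)
  then have "a i = 0" if "i < K + m" for i using lin_indep_familyD[OF indep] that by blast
  moreover have "i = K + m + (i - (K + m))" "i - (K + m) < K" if "\<not> i < K + m" using i that by auto
  ultimately show "a i = 0" using tail by metis
qed

lemma span_family_append: "span (family_append v (K + m) f ` {..<K + m + K}) = UNIV"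
proof -
  have "\<exists>a. x = (\<Sum>i<K + m + K. a i *s family_append v (K + m) f i)" for x
  proof -
    define x' where "x' = x - (\<Sum>k<K. b (v k) x *s f k)"
    have "x' \<in> perp b (span (v ` {..<K}))" unfolding perp_def
    proof (intro CollectI ballI)
      fix y assume y: "y \<in> span (v ` {..<K})"
      show "b y x' = 0"
        by (rule b_span_left_eq_0[OF y]) (auto simp: x'_def b_diff_right b_sum_dual)
    qed
    then obtain a where a: "x' = (\<Sum>i<K + m. a i *s v i)"
      using perp_span span_image_lessThan_imp_sum by blast
    define a' where "a' i = (if i < K + m then a i else b (v (i - (K + m))) x)" for i
    have "(\<Sum>i<K + m + K. a' i *s family_append v (K + m) f i) = x' + (\<Sum>k<K. b (v k) x *s f k)"
      unfolding sum_family_append a a'_def by simp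
    then show ?thesis unfolding x'_def by (metis diff_add_cancel)
  qed
  then show ?thesis using sum_in_span_image_lessThan by (metis UNIV_eq_I)
qed

lemma right_dual_tail:
  assumes w: "\<And>i j. i < K + m + K \<Longrightarrow> j < K + m + K \<Longrightarrow>
      b (family_append v (K + m) f i) (w j) = (if i = j then 1 else 0)"
    and i: "i < K"
  shows "\<exists>s. w (K + m + i) = s *s v i"
proof -
  let ?V = "family_append v (K + m) f"
  define s0 where "s0 = b (f i) (v i)"
  have "s0 \<noteq> 0" unfolding s0_def using dual[OF i i] reflexive by force
  define d where "d = v i - s0 *s w (K + m + i)"
  have "b (?V j) d = 0" if j: "j < K + m + K" for j
  proof (cases "j < K + m")
    case True
    then show ?thesis
      using w[OF j, of "K + m + i"] i b_perp_family[OF i True] reflexive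
      by (auto simp: d_def b_simps family_append_def)
  next
    case False
    define k where "k = j - (K + m)"
    have k: "j = K + m + k" "k < K" using False j unfolding k_def by auto
    then show ?thesis
      using w[OF j, of "K + m + i"] i dual[OF i k(2)] reflexive
      by (cases "k = i") (auto simp: d_def b_simps family_append_def s0_def)
  qed
  then have "b y d = 0" for y
    using span_family_append b_span_left_eq_0[of y "?V ` {..<K + m + K}" d] by auto
  then have "d = 0" using nondeg_left by blast
  then have "w (K + m + i) = inverse s0 *s v i" using \<open>s0 \<noteq> 0\<close> unfolding d_def by simp
  then show ?thesis by blast
qed

end

lemma perp_flag_basis_exists:
  assumes flag: "is_flag scale F \<nu>" and pc: "partially_complete scale F \<nu>"
    and sing: "totally_singular scale b (F \<nu>)"
  obtains m v where "\<And>i. i \<le> \<nu> \<Longrightarrow> F i = span (v ` {..<i})" and "\<And>j. j < \<nu> \<Longrightarrow> v j \<notin> F j"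
    and "lin_indep_family v (\<nu> + m)" and "perp b (F \<nu>) = span (v ` {..<\<nu> + m})"
proof -
  obtain e where e_span: "\<And>i. i \<le> \<nu> \<Longrightarrow> F i = span (e ` {..<i})" and e_inj: "inj_on e {..<\<nu>}"
    and e_indep: "independent (e ` {..<\<nu>})" and e_notin: "\<And>j. j < \<nu> \<Longrightarrow> e j \<notin> F j"
    using flag_basis_exists[OF flag pc] by blast
  have "e i \<in> F \<nu>" if "i < \<nu>" for i using e_span[of \<nu>] that by (simp add: span_base)
  then have e_perp: "e ` {..<\<nu>} \<subseteq> perp b (F \<nu>)"
    using sing unfolding totally_singular_def perp_def by blast
  obtain m v where ve: "\<And>i. i < \<nu> \<Longrightarrow> v i = e i" and v_inj: "inj_on v {..<\<nu> + m}"
    and v_indep: "independent (v ` {..<\<nu> + m})" and v_span: "span (v ` {..<\<nu> + m}) = perp b (F \<nu>)"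
    by (rule independent_family_extend[OF subspace_perp e_perp e_inj e_indep]) metis
  have "F i = span (v ` {..<i})" if "i \<le> \<nu>" for i
  proof -
    have "v ` {..<i} = e ` {..<i}" using ve that by (intro image_cong) auto
    then show ?thesis using e_span[OF that] by simp
  qed
  moreover have "v j \<notin> F j" if "j < \<nu>" for j using e_notin ve that by simp
  moreover have "lin_indep_family v (\<nu> + m)"
    by (rule independent_imp_lin_indep_family[OF v_inj v_indep])
  ultimately show thesis using that v_span by simp
qed

lemma witt_basis_exists:
  assumes flag: "is_flag scale F \<nu>" and pc: "partially_complete scale F \<nu>"
    and sing: "totally_singular scale b (F \<nu>)"
    and witt: "\<And>X. totally_singular scale b X \<Longrightarrow> dim X \<le> \<nu>"
  obtains m v w w' where "witt_basis scale Basis b F \<nu> m v w w'" and "dim (UNIV :: 'v set) = \<nu> + m + \<nu>"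
proof -
  obtain m v0 where v0_flag: "\<And>i. i \<le> \<nu> \<Longrightarrow> F i = span (v0 ` {..<i})"
    and v0_notin: "\<And>j. j < \<nu> \<Longrightarrow> v0 j \<notin> F j" and indep: "lin_indep_family v0 (\<nu> + m)"
    and v0_span: "perp b (F \<nu>) = span (v0 ` {..<\<nu> + m})"
    by (rule perp_flag_basis_exists[OF flag pc sing]) metis
  have "lin_indep_family v0 \<nu>" using lin_indep_family_mono[OF indep] by simp
  then obtain f where f: "\<And>i j. i < \<nu> \<Longrightarrow> j < \<nu> \<Longrightarrow> b (v0 i) (f j) = (if i = j then 1 else 0)"
    using dual_family_exists by blast
  have perp_span: "perp b (span (v0 ` {..<\<nu>})) = span (v0 ` {..<\<nu> + m})"
    using v0_flag[of \<nu>] v0_span by simp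
  define v where "v = family_append v0 (\<nu> + m) f"
  let ?n = "\<nu> + m + \<nu>"
  have v_indep: "lin_indep_family v ?n"
    unfolding v_def by (rule lin_indep_family_append[OF indep perp_span f])
  have v_span: "span (v ` {..<?n}) = UNIV"
    unfolding v_def by (rule span_family_append[OF indep perp_span f])
  obtain w where w: "\<And>i j. i < ?n \<Longrightarrow> j < ?n \<Longrightarrow> b (v i) (w j) = (if i = j then 1 else 0)"
    using dual_family_exists[OF v_indep] by metis
  obtain w' where w': "\<And>i j. i < ?n \<Longrightarrow> j < ?n \<Longrightarrow> b (w' j) (v i) = (if i = j then 1 else 0)"
    using reflexive_form.dual_family_exists[OF reflexive_form_swap v_indep] by metis
  have v_head: "v i = v0 i" if "i < \<nu> + m" for i using that by (simp add: v_def family_append_def)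
  have v_image: "v ` {..<i} = v0 ` {..<i}" if "i \<le> \<nu> + m" for i
    using v_head that by (intro image_cong) auto
  have "witt_basis scale Basis b F \<nu> m v w w'"
  proof unfold_locales
    show "F i = span (v ` {..<i})" if "i \<le> \<nu>" for i
      using v0_flag[OF that] v_image that by simp
    show "perp b (F \<nu>) = span (v ` {..<\<nu> + m})" using v0_span v_image by simp
    show "x = (\<Sum>i<?n. b (w' i) x *s v i)" for x
      by (rule left_dual_expansion[OF v_span w'])
    show "\<exists>s. w (\<nu> + m + i) = s *s v i" if "i < \<nu>" for i
      using right_dual_tail[OF indep perp_span f w[unfolded v_def] that] v_head that by simp
    show "b (v (\<nu> + m + k)) (v l) = 0" if "k < \<nu>" "l < \<nu>" "l \<noteq> k" for k l
      using f[of l k] reflexive v_head that by (simp add: v_def family_append_def)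
    show "v j \<notin> F j" if "j < \<nu>" for j
      using v0_notin v_head that by simp
    show "b (w' j) (v i) = (if j = i then 1 else 0)" if "i < ?n" "j < ?n" for i j
      using w'[OF that] by simp
    show "dim (F \<nu>) = \<nu>" using pc unfolding partially_complete_def by blast
  qed (use w sing witt in auto)
  moreover have "dim (UNIV :: 'v set) = ?n" by (rule dim_UNIV_eq_lin_indep_family[OF v_indep v_span])
  ultimately show thesis by (rule that)
qed

end

lemma fin_dim_vs_imp_finite_dimensional:
  assumes "fin_dim_vs scale"
  obtains Basis where "finite_dimensional_vector_space scale Basis"
proof -
  interpret vector_space scale using assms unfolding fin_dim_vs_def by blast
  obtain S where S: "finite S" "span S = UNIV" using assms unfolding fin_dim_vs_def by blast
  obtain B where B: "B \<subseteq> S" "independent B" "S \<subseteq> span B"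
    using maximal_independent_subset[of S] by blast
  have "span B = UNIV" using S(2) span_mono[OF B(3)] span_span by auto
  then have "finite_dimensional_vector_space scale B"
    using finite_subset[OF B(1) S(1)] B(2) by unfold_locales auto
  then show thesis by (rule that)
qed

lemma reflexive_if_symmetric_or_alternating:
  assumes bil: "bilinear_form scale b" and "symmetric_form b \<or> alternating_form b"
  shows "b x y = 0 \<longleftrightarrow> b y x = 0"
  using assms(2)
proof
  assume "symmetric_form b"
  then show ?thesis unfolding symmetric_form_def by metis
next
  assume alt: "alternating_form b"
  have add: "b x (y + z) = b x y + b x z" "b (x + y) z = b x z + b y z" for x y z
    using bil unfolding bilinear_form_def Vector_Spaces.linear_iff by blast+
  have "0 = b (x + y) (x + y)" using alt unfolding alternating_form_def by simp
  also have "\<dots> = b x x + b x y + b y x + b y y" by (simp add: add)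
  finally have "b x y = - b y x" using alt unfolding alternating_form_def by (simp add: eq_neg_iff_add_eq_0)
  then show ?thesis by simp
qed

lemma (in finite_dimensional_vector_space) dim_le_witt_index:
  assumes "totally_singular scale b X"
  shows "dim X \<le> witt_index scale b"
proof -
  have "{dim X |X. totally_singular scale b X} \<subseteq> {..dimension}"
    using dim_subset_UNIV by auto
  then have "finite {dim X |X. totally_singular scale b X}" by (rule finite_subset) simp
  then show ?thesis unfolding witt_index_def by (rule Max_ge) (use assms in blast)
qed

theorem mainTheorem7:
  fixes scale :: "'a::field \<Rightarrow> 'v::ab_group_add \<Rightarrow> 'v"
    and b :: "'v \<Rightarrow> 'v \<Rightarrow> 'a"
    and F :: "nat \<Rightarrow> 'v set"
  assumes "fin_dim_vs scale"
    and "bilinear_form scale b"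
    and "nondegenerate b"
    and "symmetric_form b \<or> alternating_form b"
    and "is_flag scale F (witt_index scale b)"
    and "partially_complete scale F (witt_index scale b)"
    and "singular_flag scale b F (witt_index scale b)"
  shows "WS scale b F (witt_index scale b) \<subseteq> End scale
     \<and> module.subspace (end_scale scale) (WS scale b F (witt_index scale b))
     \<and> vector_space.dim (end_scale scale) (WS scale b F (witt_index scale b))
        = witt_index scale b * (vector_space.dim scale (UNIV :: 'v set) - witt_index scale b)
   \<and> WA scale b F (witt_index scale b) \<subseteq> End scale
     \<and> module.subspace (end_scale scale) (WA scale b F (witt_index scale b))
     \<and> vector_space.dim (end_scale scale) (WA scale b F (witt_index scale b))
        = witt_index scale b * (vector_space.dim scale (UNIV :: 'v set) - witt_index scale b - 1)"
proof -
  obtain Basis where "finite_dimensional_vector_space scale Basis"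
    using fin_dim_vs_imp_finite_dimensional[OF assms(1)] .
  then interpret reflexive_form scale Basis b
    by (rule reflexive_form.intro)
      (use assms(2,3) reflexive_if_symmetric_or_alternating[OF assms(2,4)] in \<open>unfold_locales\<close>)
  obtain m v w w' where "witt_basis scale Basis b F (witt_index scale b) m v w w'"
    and dim_UNIV: "dim (UNIV :: 'v set) = witt_index scale b + m + witt_index scale b"
    using witt_basis_exists[OF assms(5,6) assms(7)[unfolded singular_flag_def] dim_le_witt_index]
    by blast
  then interpret witt_basis scale Basis b F "witt_index scale b" m v w w' by simp
  show ?thesis
    using WS_dim WA_dim unfolding dim_UNIV
    by (auto simp: WS_def WA_def b_symmetric_end_def b_alternating_end_def)
qed

end
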